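(* Let $z:[0,\infty)\to X_{0+}$ be a solution of the modified Becker–Döring equations obtained by the truncation construction described in the context, and let $\omega$ be its weak-$*$ $\omega$-limit set. Then $\{z(t):t\ge0\}$ is relatively compact in the weak-$*$ topology of $X$, and $\omega$ contains at least one equilibrium state $z^\infty\in X_{0+}$ with $$\rho_\infty:=\rho(z^\infty)\in[0,\rho_0]\quad\text{and}\quad\tilde A(z^\infty)=\lim_{t\to\infty}\tilde A(z(t)).$$ Moreover, if $\omega=\{z^\infty\}$, then $z(t)\to z^\infty$ weak-$*$ in $X$ as $t\to\infty$, and this convergence is strong in $X$ if and only if $\rho_\infty=\rho_0$.
   Context: Let $(q_l)_{l\ge1}$ be positive with $q_1=1$, $0<R:=\lim_l q_l/q_{l+1}<\infty$, and $\gamma_l>0$ with $\gamma_l/l\to0$. $X=\{z:\|z\|_X:=\sum_l l|z_l|<\infty\}$, the dual of $\{z:z_l/l\to0\}$; a sequence in $X$ converges weak-$*$ iff it is norm-bounded and converges componentwise. $X_{0+}$: nonnegative elements; $\rho(z)=\sum_l lz_l$, $N(z)=\sum_lz_l$, $J_l(z)=\gamma_l\big(z_1z_l-N(z)\frac{q_l}{q_{l+1}}z_{l+1}\big)$ ($l\ge1$), $J_0(z)=-\sum_{l\ge1}J_l(z)$; an equilibrium state is $z\in X_{0+}$ with $J_l(z)=0$ for all $l\ge0$. $A(z)=\sum_lz_l\ln(z_l/(q_lN(z)))$, $\tilde A(z)=\sum_l z_l\ln(z_l/(\tilde q_lN(z)))$ with $\tilde q_l=q_lR^l$ ($0\ln0=0$,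 value $0$ at $z=0$). Fix $y\in X_{0+}$ with $y_1>0$, $\rho_0:=\rho(y)>0$. For $m\ge2$ let $z^{(m)}$ solve $\dot z_l=J_{l-1}(z)-J_l(z)$ ($2\le l\le m-1$), $\dot z_m=J_{m-1}(z)$, $\dot z_1=-J_1(z)-\sum_{l=1}^{m-1}J_l(z)$, $z_l(0)=y_l$ ($l\le m$), $z_l\equiv0$ for $l>m$. The solution $z$ is a continuous $[0,\infty)\to X$ map with $z^{(m_j)}_l\to z_l$ uniformly on compacts for every $l$ along some subsequence $m_j\to\infty$; it satisfies $z(t)\in X_{0+}$, $\rho(z(t))=\rho_0$, and $A(z(t))$ is nonincreasing. $\omega=\{w\in X: w=\text{weak-}*\lim_k z(t_k)\text{ for some }t_k\to\infty\}$. *)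

theory Defs
  imports "HOL-Analysis.Analysis"
begin

text \<open>Sequences z = (z_l)_{l>=1} are modelled as functions nat => real; the
  unused index 0 is required to be 0 for elements of X.\<close>

definition Xsp :: "(nat \<Rightarrow> real) set" where
  "Xsp = {z. z 0 = 0 \<and> summable (\<lambda>l. real l * \<bar>z l\<bar>)}"

definition Xnorm :: "(nat \<Rightarrow> real) \<Rightarrow> real" where
  "Xnorm z = (\<Sum>l. real l * \<bar>z l\<bar>)"

definition X0p :: "(nat \<Rightarrow> real) set" where
  "X0p = {z \<in> Xsp. \<forall>l. z l \<ge> 0}"

definition rho :: "(nat \<Rightarrow> real) \<Rightarrow> real" where
  "rho z = (\<Sum>l. real l * z l)"

definition Ntot :: "(nat \<Rightarrow> real) \<Rightarrow> real" where
  "Ntot z = (\<Sum>l. z l)"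

definition predual :: "(nat \<Rightarrow> real) set" where
  "predual = {f. (\<lambda>l. f (Suc l) / real (Suc l)) \<longlonglongrightarrow> 0}"

definition pairing :: "(nat \<Rightarrow> real) \<Rightarrow> (nat \<Rightarrow> real) \<Rightarrow> real" where
  "pairing f z = (\<Sum>l. f (Suc l) * z (Suc l))"

definition weakstar :: "(nat \<Rightarrow> real) topology" where
  "weakstar = topology_generated_by
     {{z \<in> Xsp. pairing f z \<in> U} | f U. f \<in> predual \<and> open U}"

definition Jflux :: "(nat \<Rightarrow> real) \<Rightarrow> (nat \<Rightarrow> real) \<Rightarrow> (nat \<Rightarrow> real) \<Rightarrow> nat \<Rightarrow> real" where
  "Jflux gam q z l =
     (if l = 0 then - (\<Sum>k. gam (Suc k) * (z 1 * z (Suc k) - Ntot z * q (Suc k) / q (Suc (Suc k)) * z (Suc (Suc k))))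
      else gam l * (z 1 * z l - Ntot z * q l / q (Suc l) * z (Suc l)))"

definition equilibrium :: "(nat \<Rightarrow> real) \<Rightarrow> (nat \<Rightarrow> real) \<Rightarrow> (nat \<Rightarrow> real) \<Rightarrow> bool" where
  "equilibrium gam q z \<longleftrightarrow> z \<in> X0p \<and> (\<forall>l. Jflux gam q z l = 0)"

text \<open>Real ln 0 = 0 and x/0 = 0 in Isabelle, giving the conventions 0 ln 0 = 0
  and value 0 at z = 0.\<close>
definition Afun :: "(nat \<Rightarrow> real) \<Rightarrow> (nat \<Rightarrow> real) \<Rightarrow> real" where
  "Afun q z = (\<Sum>l. z (Suc l) * ln (z (Suc l) / (q (Suc l) * Ntot z)))"

definition Atil :: "(nat \<Rightarrow> real) \<Rightarrow> real \<Rightarrow> (nat \<Rightarrow> real) \<Rightarrow> real" where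
  "Atil q R z = Afun (\<lambda>l. q l * R ^ l) z"

definition truncated_solution ::
  "(nat \<Rightarrow> real) \<Rightarrow> (nat \<Rightarrow> real) \<Rightarrow> (nat \<Rightarrow> real) \<Rightarrow> nat \<Rightarrow> (real \<Rightarrow> nat \<Rightarrow> real) \<Rightarrow> bool" where
  "truncated_solution gam q y m zm \<longleftrightarrow>
     (\<forall>t\<ge>0. \<forall>l. (l = 0 \<or> l > m) \<longrightarrow> zm t l = 0) \<and>
     (\<forall>l. 1 \<le> l \<and> l \<le> m \<longrightarrow> zm 0 l = y l) \<and>
     (\<forall>t\<ge>0.
        ((\<lambda>s. zm s 1) has_real_derivative
            (- Jflux gam q (zm t) 1 - (\<Sum>k=1..m-1. Jflux gam q (zm t) k))) (at t within {0..}) \<and>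
        (\<forall>l. 2 \<le> l \<and> l \<le> m - 1 \<longrightarrow>
           ((\<lambda>s. zm s l) has_real_derivative
               (Jflux gam q (zm t) (l - 1) - Jflux gam q (zm t) l)) (at t within {0..})) \<and>
        ((\<lambda>s. zm s m) has_real_derivative Jflux gam q (zm t) (m - 1)) (at t within {0..}))"

end

theory Submission
  imports Defs "HOL-Real_Asymp.Real_Asymp"
begin

text \<open>
  Mass is conserved along the orbit, which therefore lies in a mass ball
  \<open>{z \<in> X\<^sub>0\<^sub>+. \<rho>(z) \<le> \<rho>\<^sub>0}\<close>; this ball is compact for the product topology, on which the
  weak-* topology is no finer, so the orbit is relatively weak-* compact and weak-*
  convergence there is componentwise convergence.

  The truncated solutions stay positive (quasi-positivity of the vector field, then a
  Gronwall argument up the chain), conserve mass and dissipate their free energy: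
  \<open>A\<^sub>m(t) + \<integral>\<^sub>0\<^sup>t D\<^sub>m \<le> A\<^sub>m(0)\<close>, with \<open>A\<^sub>m\<close> bounded below uniformly in \<open>m\<close>. Hence
  every finite part of the dissipation of \<open>z\<close> has integral bounded independently of the
  time, and along suitable times \<open>t\<^sub>k \<rightarrow> \<infinity>\<close> it tends to zero; a weak-* limit point along
  them has vanishing dissipation, i.e. it is an equilibrium. Because \<open>ln (q\<^sub>l R\<^sup>l) = o(l)\<close>,
  \<open>Atil = A - \<rho> ln R\<close> is weak-* continuous on mass balls; as it is nonincreasing along \<open>z\<close>,
  its limit is its value at that equilibrium.

  Finally the \<open>X\<close>-distance to a nonnegative limit is controlled by finitely many
  coordinates plus the two mass tails, so strong convergence holds exactly when no mass
  is lost.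
\<close>

section \<open>Nonnegative sequences of finite mass\<close>

lemma X0pD:
  assumes "z \<in> X0p"
  shows "z 0 = 0" "\<And>l. z l \<ge> 0" "summable (\<lambda>l. real l * z l)"
proof -
  show "z 0 = 0" "\<And>l. z l \<ge> 0" using assms by (auto simp: X0p_def Xsp_def)
  then show "summable (\<lambda>l. real l * z l)" using assms by (simp add: X0p_def Xsp_def)
qed

lemma X0p_Xsp: "z \<in> X0p \<Longrightarrow> z \<in> Xsp"
  by (simp add: X0p_def)

lemma le_of_nat_mult_self: "l \<noteq> 0 \<Longrightarrow> 0 \<le> (x::real) \<Longrightarrow> x \<le> real l * x"
  using mult_right_mono[of 1 "real l" x] by simp

lemma X0p_rho_nonneg: "z \<in> X0p \<Longrightarrow> rho z \<ge> 0"
  unfolding rho_def using X0pD by (intro suminf_nonneg) auto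

lemma X0p_term_le_rho:
  assumes "z \<in> X0p" shows "real l * z l \<le> rho z"
  using sum_le_suminf[of "\<lambda>l. real l * z l" "{l}"] X0pD[OF assms] by (simp add: rho_def)

lemma X0p_le_rho:
  assumes "z \<in> X0p" shows "z l \<le> rho z"
proof (cases "l = 0")
  case True then show ?thesis using X0pD[OF assms] X0p_rho_nonneg[OF assms] by simp
next
  case False
  then show ?thesis
    using le_of_nat_mult_self[OF False X0pD(2)[OF assms, of l]] X0p_term_le_rho[OF assms, of l] by simp
qed

lemma X0p_le_mult_self: "z \<in> X0p \<Longrightarrow> z l \<le> real l * z l"
  by (cases "l = 0") (auto simp: X0pD intro: le_of_nat_mult_self)

lemma X0p_summable:
  assumes "z \<in> X0p" shows "summable z"
  by (rule summable_comparison_test'[OF X0pD(3)[OF assms], of 0])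
    (use X0pD(2)[OF assms] X0p_le_mult_self[OF assms] in auto)

lemma X0p_Ntot_nonneg: "z \<in> X0p \<Longrightarrow> Ntot z \<ge> 0"
  unfolding Ntot_def by (intro suminf_nonneg X0p_summable) (auto dest: X0pD)

lemma X0p_Ntot_le_rho: "z \<in> X0p \<Longrightarrow> Ntot z \<le> rho z"
  unfolding Ntot_def rho_def by (intro suminf_le X0p_summable X0pD(3) X0p_le_mult_self)

lemma X0p_le_Ntot:
  assumes "z \<in> X0p" shows "z l \<le> Ntot z"
  using sum_le_suminf[of z "{l}"] X0pD[OF assms] X0p_summable[OF assms] by (simp add: Ntot_def)

lemma Ntot_eq_suminf_Suc: "z \<in> X0p \<Longrightarrow> Ntot z = (\<Sum>l. z (Suc l))"
  unfolding Ntot_def using suminf_split_head[OF X0p_summable] X0pD(1) by simp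

lemma summable_Suc_X0p: "z \<in> X0p \<Longrightarrow> summable (\<lambda>l. real (Suc l) * z (Suc l))"
  using X0pD(3) summable_Suc_iff[of "\<lambda>l. real l * z l"] by simp

lemma rho_eq_suminf_Suc: "z \<in> X0p \<Longrightarrow> rho z = (\<Sum>l. real (Suc l) * z (Suc l))"
  unfolding rho_def using suminf_split_head[OF X0pD(3)] by simp

lemma rho_tail:
  assumes z: "z \<in> X0p"
  shows "summable (\<lambda>n. real (Suc (n + L)) * z (Suc (n + L)))"
    and "(\<Sum>n. real (Suc (n + L)) * z (Suc (n + L))) \<le> rho z"
proof -
  have s: "summable (\<lambda>n. real (Suc n) * z (Suc n))" by (rule summable_Suc_X0p[OF z])
  show "summable (\<lambda>n. real (Suc (n + L)) * z (Suc (n + L)))"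
    using s summable_iff_shift[of "\<lambda>n. real (Suc n) * z (Suc n)" L] by simp
  have "rho z = (\<Sum>n. real (Suc (n + L)) * z (Suc (n + L))) + (\<Sum>n<L. real (Suc n) * z (Suc n))"
    using rho_eq_suminf_Suc[OF z] suminf_split_initial_segment[OF s, of L] by simp
  moreover have "(\<Sum>n<L. real (Suc n) * z (Suc n)) \<ge> 0"
    by (intro sum_nonneg mult_nonneg_nonneg) (use X0pD(2)[OF z] in auto)
  ultimately show "(\<Sum>n. real (Suc (n + L)) * z (Suc (n + L))) \<le> rho z" by linarith
qed

definition mass_ball :: "real \<Rightarrow> (nat \<Rightarrow> real) set" where
  "mass_ball M = {z \<in> X0p. rho z \<le> M}"

lemma mass_ballD:
  assumes "z \<in> mass_ball M"
  shows "z \<in> X0p" "rho z \<le> M" "\<And>l. 0 \<le> z l" "\<And>l. z l \<le> M" "M \<ge> 0"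
proof -
  show z: "z \<in> X0p" "rho z \<le> M" using assms by (auto simp: mass_ball_def)
  show "\<And>l. 0 \<le> z l" "\<And>l. z l \<le> M" "M \<ge> 0"
    using X0pD(2)[OF z(1)] X0p_le_rho[OF z(1)] X0p_rho_nonneg[OF z(1)] z(2) by (auto intro: order_trans)
qed

section \<open>The predual pairing\<close>

lemma tendsto_of_uniform_approximation:
  fixes F :: "'a \<Rightarrow> real" and G :: "nat \<Rightarrow> 'a \<Rightarrow> real"
  assumes approx: "\<And>e. e > 0 \<Longrightarrow> \<exists>L. \<forall>x\<in>K. \<bar>F x - G L x\<bar> \<le> e"
    and conv: "\<And>L. (\<lambda>k. G L (w k)) \<longlonglongrightarrow> G L v"
    and "\<And>k. w k \<in> K" "v \<in> K"
  shows "(\<lambda>k. F (w k)) \<longlonglongrightarrow> F v"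
proof (rule LIMSEQ_I)
  fix r :: real assume r: "r > 0"
  obtain L where L: "\<forall>x\<in>K. \<bar>F x - G L x\<bar> \<le> r / 4" using approx[of "r/4"] r by auto
  obtain N where N: "\<forall>k\<ge>N. norm (G L (w k) - G L v) < r / 4"
    using LIMSEQ_D[OF conv[of L], of "r/4"] r by auto
  have "norm (F (w k) - F v) < r" if "k \<ge> N" for k
  proof -
    have "\<bar>G L (w k) - G L v\<bar> < r / 4" using N that by auto
    moreover have "\<bar>F (w k) - G L (w k)\<bar> \<le> r / 4" "\<bar>F v - G L v\<bar> \<le> r / 4"
      using L assms(3,4) by auto
    ultimately show ?thesis unfolding real_norm_def by linarith
  qed
  then show "\<exists>N. \<forall>k\<ge>N. norm (F (w k) - F v) < r" by blast
qed

lemma predual_linear_bound: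
  assumes "f \<in> predual" obtains B where "\<And>l. \<bar>f (Suc l)\<bar> \<le> B * real (Suc l)"
proof -
  have "Bseq (\<lambda>l. f (Suc l) / real (Suc l))"
    using assms convergent_imp_Bseq unfolding predual_def convergent_def by blast
  then obtain B where B: "\<And>l. \<bar>f (Suc l) / real (Suc l)\<bar> \<le> B"
    unfolding Bseq_def real_norm_def by blast
  have "\<bar>f (Suc l)\<bar> \<le> B * real (Suc l)" for l
    using B[of l] by (simp add: pos_divide_le_eq del: of_nat_Suc)
  then show ?thesis by (rule that)
qed

lemma pairing_summable:
  assumes "f \<in> predual" "z \<in> Xsp"
  shows "summable (\<lambda>l. f (Suc l) * z (Suc l))"
proof -
  obtain B where B: "\<And>l. \<bar>f (Suc l)\<bar> \<le> B * real (Suc l)"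
    using predual_linear_bound[OF assms(1)] by blast
  have "summable (\<lambda>l. real (Suc l) * \<bar>z (Suc l)\<bar>)"
    using assms(2) summable_Suc_iff[of "\<lambda>l. real l * \<bar>z l\<bar>"] by (simp add: Xsp_def)
  then have "summable (\<lambda>l. B * (real (Suc l) * \<bar>z (Suc l)\<bar>))" by (rule summable_mult)
  then show ?thesis
  proof (rule summable_comparison_test'[of _ 0])
    fix n
    have "\<bar>f (Suc n)\<bar> * \<bar>z (Suc n)\<bar> \<le> B * real (Suc n) * \<bar>z (Suc n)\<bar>"
      using B[of n] by (intro mult_right_mono) auto
    then show "norm (f (Suc n) * z (Suc n)) \<le> B * (real (Suc n) * \<bar>z (Suc n)\<bar>)"
      by (simp add: abs_mult mult.assoc)
  qed
qed

text \<open>The weight \<open>f\<^sub>l = o(l)\<close> is what makes the pairing with a predual element uniformly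
  approximable by finite sums on a mass ball.\<close>

lemma pairing_truncation_uniform:
  assumes f: "f \<in> predual" and e: "e > 0"
  shows "\<exists>L. \<forall>z\<in>mass_ball M. \<bar>pairing f z - (\<Sum>l<L. f (Suc l) * z (Suc l))\<bar> \<le> e"
proof -
  define d where "d = e / (\<bar>M\<bar> + 1)"
  have d: "d > 0" using e by (simp add: d_def)
  obtain L where L: "\<And>l. l \<ge> L \<Longrightarrow> \<bar>f (Suc l)\<bar> \<le> d * real (Suc l)"
  proof -
    obtain L where "\<forall>l\<ge>L. norm (f (Suc l) / real (Suc l) - 0) < d"
      using LIMSEQ_D[of _ 0, OF _ d] f unfolding predual_def by blast
    then show ?thesis
      by (intro that[of L]) (auto simp: pos_divide_less_eq less_imp_le simp del: of_nat_Suc)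
  qed
  show ?thesis
  proof (intro exI ballI)
    fix z assume "z \<in> mass_ball M"
    note z = mass_ballD[OF this]
    have eq: "pairing f z - (\<Sum>l<L. f (Suc l) * z (Suc l)) = (\<Sum>n. f (Suc (n + L)) * z (Suc (n + L)))"
      unfolding pairing_def
      using suminf_split_initial_segment[OF pairing_summable[OF f X0p_Xsp[OF z(1)]], of L] by simp
    have st: "summable (\<lambda>n. d * (real (Suc (n + L)) * z (Suc (n + L))))"
      by (intro summable_mult rho_tail(1)[OF z(1)])
    have "\<bar>\<Sum>n. f (Suc (n + L)) * z (Suc (n + L))\<bar> \<le> (\<Sum>n. d * (real (Suc (n + L)) * z (Suc (n + L))))"
    proof -
      have "\<bar>f (Suc (n + L))\<bar> * z (Suc (n + L)) \<le> d * real (Suc (n + L)) * z (Suc (n + L))" for n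
        using L[of "n + L"] z(3) by (intro mult_right_mono) auto
      then have "norm (f (Suc (n + L)) * z (Suc (n + L))) \<le> d * (real (Suc (n + L)) * z (Suc (n + L)))" for n
        using z(3) by (simp add: abs_mult mult.assoc)
      from norm_suminf_le[OF this st] show ?thesis by simp
    qed
    also have "\<dots> \<le> d * M"
      using suminf_mult[OF rho_tail(1)[OF z(1)], of d] rho_tail(2)[OF z(1), of L] z(2) d
      by (simp add: mult_left_mono)
    also have "\<dots> \<le> e"
      using z(5) e by (simp add: d_def field_simps)
    finally show "\<bar>pairing f z - (\<Sum>l<L. f (Suc l) * z (Suc l))\<bar> \<le> e" using eq by simp
  qed
qed

lemma pairing_tendsto_componentwise:
  assumes f: "f \<in> predual" and "\<And>k. w k \<in> mass_ball M" "v \<in> mass_ball M"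
    and c: "\<And>l. (\<lambda>k. w k l) \<longlonglongrightarrow> v l"
  shows "(\<lambda>k. pairing f (w k)) \<longlonglongrightarrow> pairing f v"
proof (rule tendsto_of_uniform_approximation[where K = "mass_ball M" and F = "pairing f"
      and G = "\<lambda>L z. \<Sum>l<L. f (Suc l) * z (Suc l)"])
  show "\<exists>L. \<forall>z\<in>mass_ball M. \<bar>pairing f z - (\<Sum>l<L. f (Suc l) * z (Suc l))\<bar> \<le> e" if "e > 0" for e
    using pairing_truncation_uniform[OF f that] .
  show "(\<lambda>k. \<Sum>l<L. f (Suc l) * w k (Suc l)) \<longlonglongrightarrow> (\<Sum>l<L. f (Suc l) * v (Suc l))" for L
    by (intro tendsto_intros c)
qed (use assms in auto)

lemma Ntot_eq_pairing: "z \<in> X0p \<Longrightarrow> Ntot z = pairing (\<lambda>_. 1) z"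
  unfolding pairing_def by (simp add: Ntot_eq_suminf_Suc)

lemma const_one_predual: "(\<lambda>_. 1) \<in> predual"
  unfolding predual_def mem_Collect_eq by (rule LIMSEQ_Suc) (rule lim_inverse_n')

lemma Ntot_tendsto_componentwise:
  assumes "\<And>k. w k \<in> mass_ball M" "v \<in> mass_ball M" "\<And>l. (\<lambda>k. w k l) \<longlonglongrightarrow> v l"
  shows "(\<lambda>k. Ntot (w k)) \<longlonglongrightarrow> Ntot v"
proof -
  have "\<And>k. w k \<in> X0p" "v \<in> X0p" using assms(1,2) by (auto dest: mass_ballD)
  then show ?thesis
    using pairing_tendsto_componentwise[OF const_one_predual assms] by (simp add: Ntot_eq_pairing)
qed

section \<open>The weak-* topology\<close>

lemma topspace_weakstar: "topspace weakstar = Xsp"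
proof -
  have "Xsp \<in> {{z \<in> Xsp. pairing f z \<in> U} | f U. f \<in> predual \<and> open U}"
    by (intro CollectI exI[of _ "\<lambda>_. 0"] exI[of _ UNIV]) (auto simp: predual_def)
  then show ?thesis unfolding weakstar_def topology_generated_by_topspace by blast
qed

lemma limitin_topology_generated_by:
  assumes "l \<in> \<Union>S" and ev: "\<And>U. U \<in> S \<Longrightarrow> l \<in> U \<Longrightarrow> eventually (\<lambda>x. f x \<in> U) F"
  shows "limitin (topology_generated_by S) f l F"
  unfolding limitin_def
proof (intro conjI allI impI)
  show "l \<in> topspace (topology_generated_by S)" using assms(1) by simp
  fix U assume "openin (topology_generated_by S) U \<and> l \<in> U"
  then have "generate_topology_on S U" "l \<in> U"
    using openin_topology_generated_by by auto
  then show "\<forall>\<^sub>F x in F. f x \<in> U"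
  proof (induction)
    case Empty then show ?case by simp
  next
    case (Int a b) then show ?case by (auto intro: eventually_conj elim: eventually_mono)
  next
    case (UN K)
    then obtain k where "k \<in> K" "l \<in> k" by auto
    with UN.IH have "\<forall>\<^sub>F x in F. f x \<in> k" by auto
    then show ?case by (rule eventually_mono) (use \<open>k \<in> K\<close> in auto)
  next
    case (Basis s) then show ?case using ev by auto
  qed
qed

lemma limitin_weakstarI:
  assumes v: "v \<in> Xsp" and ev: "\<And>f. f \<in> predual \<Longrightarrow> ((\<lambda>x. pairing f (g x)) \<longlongrightarrow> pairing f v) F"
    and gX: "eventually (\<lambda>x. g x \<in> Xsp) F"
  shows "limitin weakstar g v F"
  unfolding weakstar_def
proof (rule limitin_topology_generated_by)
  show "v \<in> \<Union> {{z \<in> Xsp. pairing f z \<in> U} | f U. f \<in> predual \<and> open U}"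
    using topspace_weakstar v unfolding weakstar_def by simp
  fix U assume U: "U \<in> {{z \<in> Xsp. pairing f z \<in> U} | f U. f \<in> predual \<and> open U}" "v \<in> U"
  then obtain f V where fV: "U = {z \<in> Xsp. pairing f z \<in> V}" "f \<in> predual" "open V" by auto
  have "eventually (\<lambda>x. pairing f (g x) \<in> V) F"
    using ev[OF fV(2)] fV U(2) topological_tendstoD by fastforce
  with gX show "\<forall>\<^sub>F x in F. g x \<in> U" unfolding fV(1) by (auto elim: eventually_elim2)
qed

lemma limitin_weakstar_componentwise:
  assumes "\<And>k. w k \<in> mass_ball M" "v \<in> mass_ball M" "\<And>l. (\<lambda>k. w k l) \<longlonglongrightarrow> v l"
  shows "limitin weakstar w v sequentially"
proof (rule limitin_weakstarI)
  show "v \<in> Xsp" "\<forall>\<^sub>F k in sequentially. w k \<in> Xsp"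
    using assms(1,2) by (auto dest: mass_ballD intro: X0p_Xsp always_eventually)
qed (rule pairing_tendsto_componentwise[OF _ assms])

lemma continuous_map_pairing:
  assumes "f \<in> predual" shows "continuous_map weakstar euclidean (pairing f)"
proof -
  have "openin weakstar {z \<in> Xsp. pairing f z \<in> U}" if "open U" for U
    unfolding weakstar_def by (rule topology_generated_by_Basis) (use assms that in blast)
  then show ?thesis by (simp add: continuous_map_def topspace_weakstar)
qed

lemma indicator_predual: "(indicator {l} :: nat \<Rightarrow> real) \<in> predual"
proof -
  have "\<forall>\<^sub>F k in sequentially. (indicator {l} (Suc k) :: real) / real (Suc k) = 0"
    unfolding eventually_sequentially by (intro exI[of _ l]) auto
  then show ?thesis unfolding predual_def by (simp add: tendsto_eventually)
qed

lemma pairing_indicator: "l \<ge> 1 \<Longrightarrow> pairing (indicator {l}) z = z l"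
  unfolding pairing_def by (subst suminf_finite[of "{l - 1}"]) (auto simp: indicator_def)

lemma limitin_weakstar_coordinate:
  assumes "limitin weakstar g v F" "l \<ge> 1"
  shows "((\<lambda>x. g x l) \<longlongrightarrow> v l) F"
proof -
  have "limitin euclidean (pairing (indicator {l}) \<circ> g) (pairing (indicator {l}) v) F"
    by (rule continuous_map_limit[OF continuous_map_pairing[OF indicator_predual] assms(1)])
  then show ?thesis by (simp add: o_def pairing_indicator[OF assms(2)])
qed

section \<open>Compactness of the mass balls\<close>

lemma partial_mass_predual: "(\<lambda>k. if k < L then real k else 0) \<in> predual"
proof -
  have "\<forall>\<^sub>F k in sequentially. (if Suc k < L then real (Suc k) else 0) / real (Suc k) = 0"
    unfolding eventually_sequentially by (intro exI[of _ L]) auto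
  then show ?thesis unfolding predual_def by (simp add: tendsto_eventually)
qed

lemma pairing_partial_mass: "pairing (\<lambda>k. if k < L then real k else 0) z = (\<Sum>k<L. real k * z k)"
proof -
  have "pairing (\<lambda>k. if k < L then real k else 0) z = (\<Sum>k<L. (if Suc k < L then real (Suc k) else 0) * z (Suc k))"
    unfolding pairing_def by (rule suminf_finite) auto
  also have "\<dots> = (\<Sum>k<Suc L. (if k < L then real k else 0) * z k)"
    by (subst sum.lessThan_Suc_shift) simp
  finally show ?thesis by simp
qed

lemma mass_ball_iff_partial_sums:
  "z \<in> mass_ball M \<longleftrightarrow> z \<in> Xsp \<and> (\<forall>l\<ge>1. z l \<ge> 0) \<and> (\<forall>L. (\<Sum>k<L. real k * z k) \<le> M)"
proof
  assume z: "z \<in> mass_ball M"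
  have "(\<Sum>k<L. real k * z k) \<le> M" for L
    using sum_le_suminf[of "\<lambda>k. real k * z k" "{..<L}"] mass_ballD[OF z] X0pD[OF mass_ballD(1)[OF z]]
    by (simp add: rho_def)
  then show "z \<in> Xsp \<and> (\<forall>l\<ge>1. z l \<ge> 0) \<and> (\<forall>L. (\<Sum>k<L. real k * z k) \<le> M)"
    using mass_ballD[OF z] by (simp add: X0p_Xsp)
next
  assume z: "z \<in> Xsp \<and> (\<forall>l\<ge>1. z l \<ge> 0) \<and> (\<forall>L. (\<Sum>k<L. real k * z k) \<le> M)"
  then have "z l \<ge> 0" for l
    by (cases "l = 0") (auto simp: Xsp_def)
  then have "z \<in> X0p" using z by (simp add: X0p_def)
  moreover have "rho z \<le> M"
    unfolding rho_def by (rule suminf_le_const) (use X0pD(3)[OF \<open>z \<in> X0p\<close>] z in auto)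
  ultimately show "z \<in> mass_ball M" by (simp add: mass_ball_def)
qed

lemma closedin_weakstar_mass_ball: "closedin weakstar (mass_ball M)"
proof -
  define A where "A l = {z \<in> topspace weakstar. pairing (indicator {l}) z \<in> {0..}}" for l
  define B where "B L = {z \<in> topspace weakstar. pairing (\<lambda>k. if k < L then real k else 0) z \<in> {..M}}" for L
  have c: "closedin weakstar {z \<in> topspace weakstar. pairing f z \<in> C}" if "f \<in> predual" "closed C" for f C
    by (rule closedin_continuous_map_preimage[OF continuous_map_pairing[OF that(1)] that(2)[unfolded closed_closedin]])
  have "closedin weakstar (\<Inter>l\<in>{1..}. A l)"
    unfolding A_def by (intro closedin_INT c indicator_predual) auto
  moreover have "closedin weakstar (\<Inter>L. B L)"
    unfolding B_def by (intro closedin_INT c partial_mass_predual) auto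
  moreover have "mass_ball M = (\<Inter>l\<in>{1..}. A l) \<inter> (\<Inter>L. B L)"
    unfolding A_def B_def
    by (auto simp: mass_ball_iff_partial_sums topspace_weakstar pairing_indicator pairing_partial_mass)
  ultimately show ?thesis by auto
qed

lemma tendsto_fun_apply:
  fixes u :: "nat \<Rightarrow> 'i \<Rightarrow> 'a::topological_space"
  assumes "u \<longlonglongrightarrow> a" shows "(\<lambda>n. u n l) \<longlonglongrightarrow> a l"
  using continuous_on_tendsto_compose[OF continuous_on_product_coordinates assms] by simp

lemma closed_mass_ball: "closed (mass_ball M)"
proof -
  have "mass_ball M = {z. z 0 = 0} \<inter> (\<Inter>l. {z. z l \<ge> 0}) \<inter> (\<Inter>L. {z. (\<Sum>k<L. real k * z k) \<le> M})"
  proof (intro set_eqI iffI)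
    fix z assume "z \<in> mass_ball M"
    then show "z \<in> {z. z 0 = 0} \<inter> (\<Inter>l. {z. z l \<ge> 0}) \<inter> (\<Inter>L. {z. (\<Sum>k<L. real k * z k) \<le> M})"
      using mass_ball_iff_partial_sums[of z M] mass_ballD(3)[of z M] X0pD(1)[OF mass_ballD(1)] by auto
  next
    fix z assume "z \<in> {z. z 0 = 0} \<inter> (\<Inter>l. {z. z l \<ge> 0}) \<inter> (\<Inter>L. {z. (\<Sum>k<L. real k * z k) \<le> M})"
    then have nn: "\<And>l. z l \<ge> 0" and s: "\<And>L. (\<Sum>k<L. real k * z k) \<le> M" and "z 0 = 0" by auto
    then have "z \<in> Xsp"
      using summableI_nonneg_bounded[of "\<lambda>l. real l * z l", OF _ s] by (simp add: Xsp_def)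
    then show "z \<in> mass_ball M" using nn s by (simp add: mass_ball_iff_partial_sums)
  qed
  moreover have "closed {z::nat\<Rightarrow>real. z 0 = 0}"
    by (intro closed_Collect_eq continuous_on_product_coordinates continuous_on_const)
  moreover have "closed (\<Inter>l. {z::nat\<Rightarrow>real. z l \<ge> 0})"
    by (intro closed_INT ballI closed_Collect_le continuous_on_product_coordinates continuous_on_const)
  moreover have "closed (\<Inter>L. {z::nat\<Rightarrow>real. (\<Sum>k<L. real k * z k) \<le> M})"
    by (intro closed_INT ballI closed_Collect_le continuous_on_product_coordinates continuous_on_const
        continuous_on_sum continuous_on_mult)
  ultimately show ?thesis by (simp only: closed_Int)
qed

lemma compact_mass_ball: "compact (mass_ball M)"
proof (cases "M \<ge> 0")
  case True
  have "compactin (product_topology (\<lambda>_. euclidean) UNIV) (PiE UNIV (\<lambda>_::nat. {0..M}))"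
    by (subst compactin_PiE) auto
  then have "compact (PiE UNIV (\<lambda>_::nat. {0..M}))"
    by (simp add: euclidean_product_topology)
  moreover have "mass_ball M \<subseteq> PiE UNIV (\<lambda>_::nat. {0..M})"
    using mass_ballD(3,4) by auto
  ultimately show ?thesis
    using compact_Int_closed[OF _ closed_mass_ball] by (metis inf.absorb_iff2)
next
  case False
  then have "mass_ball M = {}" using mass_ballD(5) by blast
  then show ?thesis by simp
qed

text \<open>On a mass ball the weak-* topology is coarser than the product topology, since each
  pairing is continuous there; this transfers compactness.\<close>

lemma compactin_weakstar_mass_ball: "compactin weakstar (mass_ball M)"
proof -
  let ?S = "{{z \<in> Xsp. pairing f z \<in> U} | f U. f \<in> predual \<and> open U}"
  have BX: "mass_ball M \<subseteq> Xsp" by (auto simp: mass_ball_def X0p_def)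
  have "continuous_map (top_of_set (mass_ball M)) weakstar id"
    unfolding weakstar_def
  proof (rule continuous_on_generated_topo)
    fix U assume "U \<in> ?S"
    then obtain f V where fV: "U = {z \<in> Xsp. pairing f z \<in> V}" "f \<in> predual" "open V" by auto
    have "continuous_on (mass_ball M) (pairing f)"
    proof (rule continuous_on_sequentiallyI)
      fix u a assume "\<forall>n. u n \<in> mass_ball M" "a \<in> mass_ball M" and lim: "u \<longlonglongrightarrow> a"
      then show "(\<lambda>n. pairing f (u n)) \<longlonglongrightarrow> pairing f a"
        using pairing_tendsto_componentwise[OF fV(2), of u M a] tendsto_fun_apply[OF lim] by simp
    qed
    then have "openin (top_of_set (mass_ball M)) (mass_ball M \<inter> pairing f -` V)"
      using continuous_openin_preimage_gen fV(3) by blast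
    moreover have "id -` U \<inter> topspace (top_of_set (mass_ball M)) = mass_ball M \<inter> pairing f -` V"
      using BX fV(1) by auto
    ultimately show "openin (top_of_set (mass_ball M)) (id -` U \<inter> topspace (top_of_set (mass_ball M)))"
      by simp
  next
    show "id ` topspace (top_of_set (mass_ball M)) \<subseteq> \<Union> ?S"
      using BX topspace_weakstar unfolding weakstar_def by simp
  qed
  moreover have "compactin (top_of_set (mass_ball M)) (mass_ball M)"
    using compact_mass_ball by (simp add: compactin_subtopology)
  ultimately show ?thesis using image_compactin by fastforce
qed

lemma mass_ball_convergent_subseq:
  fixes x :: "nat \<Rightarrow> nat \<Rightarrow> real"
  assumes "\<And>k. x k \<in> mass_ball M"
  obtains r v where "strict_mono r" "v \<in> mass_ball M" "\<And>l. (\<lambda>k. x (r k) l) \<longlonglongrightarrow> v l"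
proof -
  obtain v r where v: "v \<in> mass_ball M" "strict_mono r" and lim: "(x \<circ> r) \<longlonglongrightarrow> v"
    using seq_compactE[OF compact_imp_seq_compact[OF compact_mass_ball]] assms by blast
  show ?thesis
    by (rule that[OF v(2,1)]) (use tendsto_fun_apply[OF lim] in \<open>simp add: o_def\<close>)
qed

section \<open>The free energy\<close>

definition xlnx :: "real \<Rightarrow> real" where "xlnx x = x * ln x"

lemma xlnx_0 [simp]: "xlnx 0 = 0"
  by (simp add: xlnx_def)

lemma continuous_on_xlnx: "continuous_on {0..} xlnx"
proof -
  have "continuous (at x within {0..}) xlnx" if "x \<ge> 0" for x
  proof (cases "x = 0")
    case True
    have "(xlnx \<longlongrightarrow> 0) (at_right 0)" unfolding xlnx_def[abs_def] by real_asymp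
    then show ?thesis using True by (simp add: continuous_within at_within_Ici_at_right)
  next
    case False
    then have "isCont (\<lambda>x. x * ln x) x" using that by (intro continuous_intros) auto
    then show ?thesis unfolding xlnx_def by (rule continuous_at_imp_continuous_within)
  qed
  then show ?thesis using continuous_on_eq_continuous_within by auto
qed

lemma tendsto_xlnx:
  assumes "(f \<longlongrightarrow> a) F" "eventually (\<lambda>x. f x \<ge> 0) F" "a \<ge> 0"
  shows "((\<lambda>x. xlnx (f x)) \<longlongrightarrow> xlnx a) F"
  using continuous_on_tendsto_compose[OF continuous_on_xlnx assms(1)] assms(2,3) by simp

lemma DERIV_xlnx: "x > 0 \<Longrightarrow> (xlnx has_real_derivative ln x + 1) (at x)"
  unfolding xlnx_def[abs_def] by (rule derivative_eq_intros | simp)+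

lemma xlnx_ge_tangent:
  assumes x: "0 \<le> x" and p: "0 < p"
  shows "x * ln p + x - p \<le> xlnx x"
proof (cases "x = 0")
  case True then show ?thesis using p by simp
next
  case False
  then have x0: "x > 0" using x by simp
  have "ln p - ln x \<le> p / x - 1"
    using ln_le_minus_one[of "p / x"] x0 p by (simp add: ln_div)
  then have "x * (ln p - ln x) \<le> x * (p / x - 1)" using x0 by (intro mult_left_mono) auto
  then show ?thesis using x0 unfolding xlnx_def by (simp add: algebra_simps)
qed

lemma xlnx_ge_minus_one: "0 \<le> x \<Longrightarrow> -1 \<le> xlnx x"
  using xlnx_ge_tangent[of x 1] by simp

lemma xlnx_le: "0 \<le> x \<Longrightarrow> xlnx x \<le> x * (x - 1)"
  unfolding xlnx_def using ln_le_minus_one[of x] by (cases "x = 0") (auto intro: mult_left_mono)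

lemma xlnx_nonpos: "0 \<le> x \<Longrightarrow> x \<le> 1 \<Longrightarrow> xlnx x \<le> 0"
  unfolding xlnx_def by (cases "x = 0") (auto simp: mult_nonneg_nonpos)

text \<open>Split at \<open>x = n\<^sup>-\<^sup>4\<close>: above it \<open>-ln x \<le> 4 ln n\<close>, below it \<open>-x ln x \<le> 2 \<surd>x\<close>.\<close>

lemma minus_xlnx_le:
  fixes x n :: real
  assumes x: "0 \<le> x" "x \<le> 1" and n: "1 \<le> n"
  shows "- xlnx x \<le> 4 * x * ln n + 2 / n ^ 2"
proof -
  have t1: "4 * x * ln n \<ge> 0" using n x by simp
  have t2: "2 / n ^ 2 \<ge> 0" by simp
  have n4: "inverse (n ^ 4) > 0" using n by simp
  consider "x = 0" | "x \<ge> inverse (n ^ 4)" | "0 < x" "x < inverse (n ^ 4)" using x by linarith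
  then show ?thesis
  proof cases
    case 1 then show ?thesis using t1 t2 by simp
  next
    case 2
    have x0: "0 < x" by (rule less_le_trans[OF n4 2])
    have "ln (inverse (n ^ 4)) \<le> ln x" using 2 by (simp only: ln_le_cancel_iff[OF n4 x0])
    moreover have "ln (inverse (n ^ 4)) = - (4 * ln n)" using n by (simp add: ln_inverse ln_realpow)
    ultimately have "x * (- ln x) \<le> x * (4 * ln n)" using x by (intro mult_left_mono) auto
    then have "- xlnx x \<le> 4 * x * ln n" unfolding xlnx_def by (simp add: mult_ac)
    then show ?thesis using t2 by linarith
  next
    case 3
    define s where "s = sqrt x"
    have s: "s > 0" "s * s = x" using 3 by (auto simp: s_def)
    have "- ln s < 1 / s"
      using ln_le_minus_one[of "1 / s"] s by (simp add: ln_div)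
    moreover have "ln x = 2 * ln s"
      using ln_mult_pos[OF s(1) s(1)] s(2) by simp
    ultimately have "x * (- ln x) \<le> x * (2 / s)" using s by (intro mult_left_mono) auto
    also have "x * (2 / s) = 2 * s" using s by (simp add: field_simps)
    also have "s < sqrt (inverse (n ^ 4))" using 3 by (simp add: s_def)
    also have "sqrt (inverse (n ^ 4)) = inverse (n ^ 2)"
    proof -
      have "n ^ 4 = (n ^ 2) ^ 2" by simp
      then have "sqrt (n ^ 4) = \<bar>n ^ 2\<bar>" by (simp only: real_sqrt_abs)
      then show ?thesis by (simp add: real_sqrt_inverse)
    qed
    finally show ?thesis using t1 unfolding xlnx_def by (simp add: divide_inverse)
  qed
qed

lemma summable_two_over_Suc_square: "summable (\<lambda>n. 2 / real (Suc n) ^ 2)"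
proof -
  have "summable (\<lambda>n. inverse (real (Suc n) ^ 2))"
    using inverse_power_summable[of 2] summable_Suc_iff[of "\<lambda>n. inverse (real n ^ 2)"] by simp
  then show ?thesis using summable_mult[of _ 2] by (simp add: divide_inverse)
qed

lemma abs_xlnx_le_of_mass:
  assumes z: "z \<in> X0p" and m: "m \<ge> 1" "rho z \<le> real m" and d: "ln (real m) \<le> d * real m"
  shows "\<bar>xlnx (z m)\<bar> \<le> 4 * d * (real m * z m) + 2 / real m ^ 2"
proof -
  have zm0: "z m \<ge> 0" using X0pD(2)[OF z] by simp
  have "real m * z m \<le> real m * 1" using X0p_term_le_rho[OF z, of m] m(2) by linarith
  then have z1: "z m \<le> 1" using m by (simp add: mult_le_cancel_left_pos)
  have "4 * z m * ln (real m) \<le> 4 * z m * (d * real m)" using d zm0 by (intro mult_left_mono) auto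
  then show ?thesis
    using xlnx_nonpos[OF zm0 z1] minus_xlnx_le[OF zm0 z1, of "real m"] m by (simp add: mult_ac)
qed

lemma summable_xlnx:
  assumes z: "z \<in> X0p" shows "summable (\<lambda>l. xlnx (z (Suc l)))"
proof (rule summable_comparison_test'[of "\<lambda>n. 4 * (real (Suc n) * z (Suc n)) + 2 / real (Suc n) ^ 2"
      "nat \<lceil>rho z\<rceil>"])
  show "summable (\<lambda>n. 4 * (real (Suc n) * z (Suc n)) + 2 / real (Suc n) ^ 2)"
    by (intro summable_add summable_mult summable_Suc_X0p[OF z] summable_two_over_Suc_square)
  fix n assume "n \<ge> nat \<lceil>rho z\<rceil>"
  then have "rho z \<le> real (Suc n)" by linarith
  moreover have "ln (real (Suc n)) \<le> 1 * real (Suc n)" using ln_le_minus_one[of "real (Suc n)"] by simp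
  ultimately show "norm (xlnx (z (Suc n))) \<le> 4 * (real (Suc n) * z (Suc n)) + 2 / real (Suc n) ^ 2"
    using abs_xlnx_le_of_mass[OF z, of "Suc n" 1] by simp
qed

lemma summable_mult_ln_of_linear_bound:
  assumes z: "z \<in> X0p" and B: "\<forall>l\<ge>1. \<bar>ln (p l)\<bar> \<le> B * real l"
  shows "summable (\<lambda>l. z (Suc l) * ln (p (Suc l)))"
proof (rule summable_comparison_test'[of "\<lambda>l. B * (real (Suc l) * z (Suc l))" 0])
  show "summable (\<lambda>l. B * (real (Suc l) * z (Suc l)))"
    by (intro summable_mult summable_Suc_X0p[OF z])
  fix n
  have "\<bar>ln (p (Suc n))\<bar> * z (Suc n) \<le> B * real (Suc n) * z (Suc n)"
    using B X0pD(2)[OF z, of "Suc n"] by (intro mult_right_mono) auto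
  then show "norm (z (Suc n) * ln (p (Suc n))) \<le> B * (real (Suc n) * z (Suc n))"
    using X0pD(2)[OF z, of "Suc n"] by (simp add: abs_mult mult_ac)
qed

lemma Afun_eq_entropy_split:
  assumes z: "z \<in> X0p" and p_pos: "\<forall>l\<ge>1. p l > 0" and B: "\<forall>l\<ge>1. \<bar>ln (p l)\<bar> \<le> B * real l"
  shows "Afun p z = (\<Sum>l. xlnx (z (Suc l))) - (\<Sum>l. z (Suc l) * ln (p (Suc l))) - xlnx (Ntot z)"
proof -
  let ?N = "Ntot z"
  have summand: "z (Suc l) * ln (z (Suc l) / (p (Suc l) * ?N)) =
      xlnx (z (Suc l)) - z (Suc l) * ln (p (Suc l)) - z (Suc l) * ln ?N" for l
  proof (cases "z (Suc l) = 0")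
    case False
    then have "z (Suc l) > 0" "?N > 0" "p (Suc l) > 0"
      using X0pD(2)[OF z, of "Suc l"] X0p_le_Ntot[OF z, of "Suc l"] p_pos by auto
    then show ?thesis by (simp add: xlnx_def ln_div ln_mult algebra_simps)
  qed simp
  have s1: "summable (\<lambda>l. xlnx (z (Suc l)))" by (rule summable_xlnx[OF z])
  have s2: "summable (\<lambda>l. z (Suc l) * ln (p (Suc l)))" by (rule summable_mult_ln_of_linear_bound[OF z B])
  have s3: "summable (\<lambda>l. z (Suc l))" using X0p_summable[OF z] summable_Suc_iff[of z] by simp
  have "Afun p z = (\<Sum>l. xlnx (z (Suc l)) - z (Suc l) * ln (p (Suc l)) - z (Suc l) * ln ?N)"
    unfolding Afun_def summand ..
  also have "\<dots> = (\<Sum>l. xlnx (z (Suc l))) - (\<Sum>l. z (Suc l) * ln (p (Suc l))) - (\<Sum>l. z (Suc l)) * ln ?N"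
    using suminf_diff[OF summable_diff[OF s1 s2] summable_mult2[OF s3]] suminf_diff[OF s1 s2]
      suminf_mult2[OF s3] by simp
  finally show ?thesis using Ntot_eq_suminf_Suc[OF z] by (simp add: xlnx_def)
qed

lemma abs_suminf_xlnx_tail_le:
  assumes z: "z \<in> X0p" and L: "rho z \<le> real L" and d: "\<And>m. m > L \<Longrightarrow> ln (real m) \<le> d * real m"
  shows "\<bar>\<Sum>n. xlnx (z (Suc (n + L)))\<bar> \<le> 4 * d * rho z + (\<Sum>n. 2 / real (Suc (n + L)) ^ 2)"
proof -
  have "0 \<le> ln (real (Suc L))" by simp
  then have "0 \<le> d * real (Suc L)" using order_trans d[of "Suc L"] by blast
  then have d0: "d \<ge> 0" by (simp add: zero_le_mult_iff)
  have st: "summable (\<lambda>n. real (Suc (n + L)) * z (Suc (n + L)))" by (rule rho_tail(1)[OF z])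
  have sq: "summable (\<lambda>n. 2 / real (Suc (n + L)) ^ 2)"
    using summable_two_over_Suc_square summable_iff_shift[of "\<lambda>n. 2 / real (Suc n) ^ 2" L] by simp
  have "norm (xlnx (z (Suc (n + L)))) \<le> 4 * d * (real (Suc (n + L)) * z (Suc (n + L))) + 2 / real (Suc (n + L)) ^ 2" for n
    using abs_xlnx_le_of_mass[OF z, of "Suc (n + L)" d] L d[of "Suc (n + L)"] by simp
  from norm_suminf_le[OF this summable_add[OF summable_mult[OF st] sq]]
  have "\<bar>\<Sum>n. xlnx (z (Suc (n + L)))\<bar>
      \<le> (\<Sum>n. 4 * d * (real (Suc (n + L)) * z (Suc (n + L))) + 2 / real (Suc (n + L)) ^ 2)"
    by simp
  also have "\<dots> = 4 * d * (\<Sum>n. real (Suc (n + L)) * z (Suc (n + L))) + (\<Sum>n. 2 / real (Suc (n + L)) ^ 2)"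
    using suminf_add[OF summable_mult[OF st] sq] suminf_mult[OF st] by simp
  also have "\<dots> \<le> 4 * d * rho z + (\<Sum>n. 2 / real (Suc (n + L)) ^ 2)"
    using rho_tail(2)[OF z, of L] d0 by (simp add: mult_left_mono)
  finally show ?thesis .
qed

lemma entropy_truncation_uniform:
  assumes e: "e > 0"
  shows "\<exists>L. \<forall>z\<in>mass_ball M. \<bar>(\<Sum>l. xlnx (z (Suc l))) - (\<Sum>l<L. xlnx (z (Suc l)))\<bar> \<le> e"
proof -
  define d where "d = e / (8 * (\<bar>M\<bar> + 1))"
  have d: "d > 0" using e by (simp add: d_def)
  have "(\<lambda>m. ln (real m) / real m) \<longlonglongrightarrow> 0"
    using filterlim_compose[OF ln_x_over_x_tendsto_0 filterlim_real_sequentially] by simp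
  then obtain L1 where L1: "\<forall>m\<ge>L1. \<bar>ln (real m) / real m\<bar> < d"
    using LIMSEQ_D[OF _ d] by fastforce
  obtain L2 where L2: "\<forall>L\<ge>L2. \<bar>\<Sum>i. 2 / real (Suc (i + L)) ^ 2\<bar> < e / 2"
    using suminf_exist_split[OF _ summable_two_over_Suc_square, of "e / 2"] e by auto
  define L where "L = max (max L1 L2) (nat \<lceil>M\<rceil>)"
  have ln_le: "ln (real m) \<le> d * real m" if "m > L" for m
    using L1[rule_format, of m] that by (auto simp: L_def divide_less_eq)
  have "L2 \<le> L" by (simp add: L_def)
  then have tail2: "(\<Sum>n. 2 / real (Suc (n + L)) ^ 2) < e / 2"
    using L2 by (meson abs_ge_self le_less_trans)
  have "M \<le> real L" using real_nat_ceiling_ge[of M] by (simp add: L_def)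
  show ?thesis
  proof (intro exI ballI)
    fix z assume "z \<in> mass_ball M"
    note z = mass_ballD[OF this]
    have "\<bar>\<Sum>n. xlnx (z (Suc (n + L)))\<bar> \<le> 4 * d * rho z + (\<Sum>n. 2 / real (Suc (n + L)) ^ 2)"
      using z(2) \<open>M \<le> real L\<close> by (intro abs_suminf_xlnx_tail_le[OF z(1) _ ln_le]) auto
    also have "4 * d * rho z \<le> 4 * d * (\<bar>M\<bar> + 1)" using z(2) d by (intro mult_left_mono) auto
    also have "\<dots> = e / 2" by (simp add: d_def field_simps)
    finally have "\<bar>\<Sum>n. xlnx (z (Suc (n + L)))\<bar> \<le> e" using tail2 by simp
    then show "\<bar>(\<Sum>l. xlnx (z (Suc l))) - (\<Sum>l<L. xlnx (z (Suc l)))\<bar> \<le> e"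
      using suminf_split_initial_segment[OF summable_xlnx[OF z(1)], of L] by simp
  qed
qed

section \<open>Growth of the coefficients\<close>

lemma tendsto_divide_Suc_of_increments:
  fixes a :: "nat \<Rightarrow> real"
  assumes "(\<lambda>n. a (Suc n) - a n) \<longlonglongrightarrow> 0"
  shows "(\<lambda>n. a n / real (Suc n)) \<longlonglongrightarrow> 0"
proof (rule LIMSEQ_I)
  fix r :: real assume r: "r > 0"
  obtain K where K: "\<And>n. n \<ge> K \<Longrightarrow> \<bar>a (Suc n) - a n\<bar> < r / 2"
    using LIMSEQ_D[OF assms, of "r/2"] r by auto
  have bound: "\<bar>a n\<bar> \<le> \<bar>a K\<bar> + r / 2 * real (n - K)" if "n \<ge> K" for n
    using that
  proof (induction n rule: dec_induct)
    case (step n)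
    have "\<bar>a (Suc n)\<bar> \<le> \<bar>a n\<bar> + r / 2" using K[OF step.hyps(1)] by linarith
    moreover have "real (Suc n - K) = real (n - K) + 1"
      using step.hyps(1) by (simp add: Suc_diff_le)
    then have "r / 2 * real (Suc n - K) = r / 2 * real (n - K) + r / 2"
      by (simp add: distrib_left)
    ultimately show ?case using step.IH by linarith
  qed simp
  have "(\<lambda>n. \<bar>a K\<bar> / real (Suc n)) \<longlonglongrightarrow> 0"
    using LIMSEQ_Suc[OF lim_const_over_n[of "\<bar>a K\<bar>"]] by simp
  then obtain N where N: "\<And>n. n \<ge> N \<Longrightarrow> \<bar>a K\<bar> / real (Suc n) < r / 2"
    using LIMSEQ_D[of _ 0 "r/2"] r by fastforce
  have "\<bar>a n / real (Suc n)\<bar> < r" if "n \<ge> max N K" for n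
  proof -
    have "\<bar>a n\<bar> / real (Suc n) \<le> (\<bar>a K\<bar> + r / 2 * real (n - K)) / real (Suc n)"
      using bound[of n] that by (intro divide_right_mono) auto
    also have "\<dots> = \<bar>a K\<bar> / real (Suc n) + r / 2 * (real (n - K) / real (Suc n))"
      by (simp add: add_divide_distrib)
    also have "r / 2 * (real (n - K) / real (Suc n)) \<le> r / 2 * 1"
      using r by (intro mult_left_mono) auto
    finally have "\<bar>a n\<bar> / real (Suc n) \<le> \<bar>a K\<bar> / real (Suc n) + r / 2" by simp
    moreover have "\<bar>a K\<bar> / real (Suc n) < r / 2" using N[of n] that by simp
    moreover have "\<bar>a n / real (Suc n)\<bar> = \<bar>a n\<bar> / real (Suc n)" by simp
    ultimately show ?thesis by linarith
  qed
  then show "\<exists>N. \<forall>n\<ge>N. norm (a n / real (Suc n) - 0) < r"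
    by (intro exI[of _ "max N K"] allI impI) simp
qed

locale cluster_coefficients =
  fixes q :: "nat \<Rightarrow> real" and R :: real
  assumes q_pos: "\<forall>l\<ge>1. q l > 0"
    and R_lim: "(\<lambda>l. q (Suc l) / q (Suc (Suc l))) \<longlonglongrightarrow> R" and R_pos: "0 < R"
begin

lemma ln_q_R_pow:
  assumes "l \<ge> 1" shows "ln (q l * R ^ l) = ln (q l) + real l * ln R"
proof -
  have "q l > 0" using q_pos assms by simp
  then show ?thesis using R_pos by (simp add: ln_mult ln_realpow)
qed

lemma ln_q_R_pow_predual: "(\<lambda>l. ln (q l * R ^ l)) \<in> predual"
proof -
  have "(\<lambda>n. ln (q (Suc n) / q (Suc (Suc n)))) \<longlonglongrightarrow> ln R"
    using R_pos by (intro tendsto_ln R_lim) simp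
  then have "(\<lambda>n. ln R - ln (q (Suc n) / q (Suc (Suc n)))) \<longlonglongrightarrow> 0"
    using tendsto_diff[OF tendsto_const[of "ln R"]] by fastforce
  moreover have "ln (q (Suc (Suc n)) * R ^ Suc (Suc n)) - ln (q (Suc n) * R ^ Suc n)
      = ln R - ln (q (Suc n) / q (Suc (Suc n)))" for n
  proof -
    have "q (Suc n) > 0" "q (Suc (Suc n)) > 0" using q_pos by auto
    then have "ln (q (Suc n) / q (Suc (Suc n))) = ln (q (Suc n)) - ln (q (Suc (Suc n)))"
      by (simp add: ln_div)
    moreover have "ln (q (Suc n) * R ^ Suc n) = ln (q (Suc n)) + real (Suc n) * ln R"
      "ln (q (Suc (Suc n)) * R ^ Suc (Suc n)) = ln (q (Suc (Suc n))) + real (Suc (Suc n)) * ln R"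
      by (rule ln_q_R_pow, simp)+
    ultimately show ?thesis by (simp add: algebra_simps)
  qed
  ultimately show ?thesis
    unfolding predual_def
    using tendsto_divide_Suc_of_increments[of "\<lambda>n. ln (q (Suc n) * R ^ Suc n)"] by simp
qed

lemma ln_q_R_pow_linear_bound: obtains B where "\<forall>l\<ge>1. \<bar>ln (q l * R ^ l)\<bar> \<le> B * real l"
proof -
  obtain B where "\<And>l. \<bar>ln (q (Suc l) * R ^ Suc l)\<bar> \<le> B * real (Suc l)"
    using predual_linear_bound[OF ln_q_R_pow_predual] by blast
  then have "\<bar>ln (q l * R ^ l)\<bar> \<le> B * real l" if "l \<ge> 1" for l
    using that by (cases l) auto
  then show ?thesis using that by blast
qed

lemma ln_q_linear_bound: obtains B where "\<forall>l\<ge>1. \<bar>ln (q l)\<bar> \<le> B * real l"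
proof -
  obtain B where B: "\<forall>l\<ge>1. \<bar>ln (q l * R ^ l)\<bar> \<le> B * real l" by (rule ln_q_R_pow_linear_bound)
  have "\<bar>ln (q l)\<bar> \<le> (B + \<bar>ln R\<bar>) * real l" if "l \<ge> 1" for l
    using B that ln_q_R_pow[OF that] abs_triangle_ineq4[of "ln (q l * R ^ l)" "real l * ln R"]
    by (fastforce simp: algebra_simps abs_mult)
  then show ?thesis by (intro that[of "B + \<bar>ln R\<bar>"]) auto
qed

lemma Atil_eq:
  assumes z: "z \<in> X0p"
  shows "Atil q R z = Afun q z - ln R * rho z"
proof -
  obtain B where B: "\<forall>l\<ge>1. \<bar>ln (q l)\<bar> \<le> B * real l" by (rule ln_q_linear_bound)
  obtain B' where B': "\<forall>l\<ge>1. \<bar>ln (q l * R ^ l)\<bar> \<le> B' * real l" by (rule ln_q_R_pow_linear_bound)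
  have s1: "summable (\<lambda>l. z (Suc l) * ln (q (Suc l)))" by (rule summable_mult_ln_of_linear_bound[OF z B])
  have s2: "summable (\<lambda>l. ln R * (real (Suc l) * z (Suc l)))" by (intro summable_mult summable_Suc_X0p[OF z])
  have eq: "ln (q (Suc l) * R ^ Suc l) = ln (q (Suc l)) + real (Suc l) * ln R" for l
    by (rule ln_q_R_pow) simp
  have "(\<Sum>l. z (Suc l) * ln (q (Suc l) * R ^ Suc l))
      = (\<Sum>l. z (Suc l) * ln (q (Suc l)) + ln R * (real (Suc l) * z (Suc l)))"
    unfolding eq by (simp add: algebra_simps)
  also have "\<dots> = (\<Sum>l. z (Suc l) * ln (q (Suc l))) + ln R * rho z"
    using suminf_add[OF s1 s2] suminf_mult[OF summable_Suc_X0p[OF z], of "ln R"] rho_eq_suminf_Suc[OF z]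
    by simp
  finally show ?thesis
    using Afun_eq_entropy_split[OF z _ B'] Afun_eq_entropy_split[OF z q_pos B] q_pos R_pos
    unfolding Atil_def by simp
qed

lemma Atil_tendsto_componentwise:
  assumes w: "\<And>k. w k \<in> mass_ball M" and v: "v \<in> mass_ball M" and c: "\<And>l. (\<lambda>k. w k l) \<longlonglongrightarrow> v l"
  shows "(\<lambda>k. Atil q R (w k)) \<longlonglongrightarrow> Atil q R v"
proof -
  define f where "f = (\<lambda>l. ln (q l * R ^ l))"
  obtain B where B: "\<forall>l\<ge>1. \<bar>f l\<bar> \<le> B * real l" unfolding f_def by (rule ln_q_R_pow_linear_bound)
  have split: "Atil q R z = (\<Sum>l. xlnx (z (Suc l))) - pairing f z - xlnx (Ntot z)" if "z \<in> X0p" for z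
    using Afun_eq_entropy_split[OF that _ B[unfolded f_def]] q_pos R_pos
    unfolding Atil_def pairing_def f_def by (simp add: mult.commute)
  have t1: "(\<lambda>k. \<Sum>l. xlnx (w k (Suc l))) \<longlonglongrightarrow> (\<Sum>l. xlnx (v (Suc l)))"
  proof (rule tendsto_of_uniform_approximation[where K = "mass_ball M" and F = "\<lambda>z. \<Sum>l. xlnx (z (Suc l))"
        and G = "\<lambda>L z. \<Sum>l<L. xlnx (z (Suc l))"])
    show "\<exists>L. \<forall>z\<in>mass_ball M. \<bar>(\<Sum>l. xlnx (z (Suc l))) - (\<Sum>l<L. xlnx (z (Suc l)))\<bar> \<le> e" if "e > 0" for e
      by (rule entropy_truncation_uniform[OF that])
    show "(\<lambda>k. \<Sum>l<L. xlnx (w k (Suc l))) \<longlonglongrightarrow> (\<Sum>l<L. xlnx (v (Suc l)))" for L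
      by (intro tendsto_sum tendsto_xlnx c always_eventually allI mass_ballD(3)[OF w] mass_ballD(3)[OF v])
  qed (use w v in auto)
  have t2: "(\<lambda>k. pairing f (w k)) \<longlonglongrightarrow> pairing f v"
    using pairing_tendsto_componentwise[OF ln_q_R_pow_predual w v c] by (simp add: f_def)
  have t3: "(\<lambda>k. xlnx (Ntot (w k))) \<longlonglongrightarrow> xlnx (Ntot v)"
    by (intro tendsto_xlnx Ntot_tendsto_componentwise[OF w v c] always_eventually allI
        X0p_Ntot_nonneg mass_ballD(1)[OF w] mass_ballD(1)[OF v])
  show ?thesis
    using tendsto_diff[OF tendsto_diff[OF t1 t2] t3] split mass_ballD(1)[OF w] split[OF mass_ballD(1)[OF v]]
    by simp
qed

end

section \<open>The truncated system\<close>

definition truncated_rate :: "nat \<Rightarrow> (nat \<Rightarrow> real) \<Rightarrow> nat \<Rightarrow> real" where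
  "truncated_rate m J l =
     (if l = 1 then - J 1 - (\<Sum>k\<in>{1..<m}. J k) else if l = m then J (m - 1) else J (l - 1) - J l)"

lemma sum_mult_flux_differences:
  fixes c J :: "nat \<Rightarrow> real"
  assumes "n \<ge> 2"
  shows "(\<Sum>l\<in>{2..<n}. c l * (J (l - 1) - J l))
    = (\<Sum>k\<in>{1..<n}. (c (Suc k) - c k) * J k) - c n * J (n - 1) + c 1 * J 1"
  using assms
proof (induction n rule: nat_induct_at_least)
  case base
  then show ?case by (simp add: numeral_2_eq_2 algebra_simps)
next
  case (Suc n)
  then show ?case by (simp add: algebra_simps)
qed

text \<open>Summation by parts: a weight \<open>c\<close> enters only through \<open>c 1 + c k - c (k + 1)\<close>. The weight
  \<open>c l = l\<close> gives conservation of mass, \<open>c l = ln (u l / (q l N))\<close> the entropy dissipation.\<close>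

lemma sum_mult_truncated_rate:
  fixes c J :: "nat \<Rightarrow> real"
  assumes m: "m \<ge> 2"
  shows "(\<Sum>l\<in>{1..m}. c l * truncated_rate m J l) = - (\<Sum>k\<in>{1..<m}. J k * (c 1 + c k - c (Suc k)))"
proof -
  have "{1..m} = insert 1 (insert m {2..<m})" using m by auto
  then have "(\<Sum>l\<in>{1..m}. c l * truncated_rate m J l)
      = c 1 * (- J 1 - (\<Sum>k\<in>{1..<m}. J k)) + c m * J (m - 1) + (\<Sum>l\<in>{2..<m}. c l * (J (l - 1) - J l))"
    using m by (simp add: truncated_rate_def)
  also have "(\<Sum>l\<in>{2..<m}. c l * (J (l - 1) - J l))
      = (\<Sum>k\<in>{1..<m}. (c (Suc k) - c k) * J k) - c m * J (m - 1) + c 1 * J 1"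
    by (rule sum_mult_flux_differences[OF m])
  finally show ?thesis
    by (simp add: sum_distrib_left sum_subtractf[symmetric] sum_negf[symmetric] algebra_simps)
qed

lemma first_nonpositive_time:
  fixes v :: "'i \<Rightarrow> real \<Rightarrow> real"
  assumes I: "finite I" and cont: "\<And>l. l \<in> I \<Longrightarrow> continuous_on {0..T} (v l)"
    and init: "\<And>l. l \<in> I \<Longrightarrow> v l 0 > 0" and s: "s \<in> {0..T}" and l: "l \<in> I" "v l s \<le> 0"
  obtains t k where "0 < t" "t \<le> T" "k \<in> I" "v k t \<le> 0" "\<And>j r. j \<in> I \<Longrightarrow> 0 \<le> r \<Longrightarrow> r < t \<Longrightarrow> v j r > 0"
proof -
  define S where "S = {s\<in>{0..T}. \<exists>l\<in>I. v l s \<le> 0}"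
  have Sne: "S \<noteq> {}" using s l unfolding S_def by blast
  have Sbdd: "bdd_below S" unfolding S_def by (rule bdd_belowI[of _ 0]) auto
  have "closed ({0..T} \<inter> v l -` {..0})" if "l \<in> I" for l
    by (rule continuous_closed_preimage[OF cont[OF that]]) auto
  then have "closed (\<Union>l\<in>I. {0..T} \<inter> v l -` {..0})" by (intro closed_UN I) auto
  moreover have "S = (\<Union>l\<in>I. {0..T} \<inter> v l -` {..0})" unfolding S_def by auto
  ultimately have "closed S" by simp
  define t where "t = Inf S"
  have "t \<in> S" unfolding t_def by (rule closed_contains_Inf[OF Sne Sbdd \<open>closed S\<close>])
  then obtain k where k: "k \<in> I" "v k t \<le> 0" and tT: "t \<in> {0..T}" unfolding S_def by auto
  have "t \<noteq> 0" using k init[OF k(1)] by auto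
  then have "0 < t" using tT by simp
  moreover have "v j r > 0" if "j \<in> I" "0 \<le> r" "r < t" for j r
  proof (rule ccontr)
    assume "\<not> v j r > 0"
    then have "r \<in> S" using that tT unfolding S_def by (auto intro!: bexI[of _ j])
    then have "t \<le> r" unfolding t_def by (rule cInf_lower[OF _ Sbdd])
    then show False using that(3) by simp
  qed
  ultimately show ?thesis using that[of t k] k tT by auto
qed

text \<open>A barrier argument: \<open>u + \<epsilon> e\<^sup>(\<^sup>C\<^sup>+\<^sup>1\<^sup>)\<^sup>t\<close> stays positive for every \<open>\<epsilon> > 0\<close>, because at
  a first zero the touching component would have to be nonincreasing.\<close>

lemma nonneg_of_quasi_positive:
  fixes u u' :: "real \<Rightarrow> 'i \<Rightarrow> real"
  assumes I: "finite I"
    and cont: "\<And>l. l \<in> I \<Longrightarrow> continuous_on {0..T} (\<lambda>s. u s l)"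
    and deriv: "\<And>s l. 0 < s \<Longrightarrow> s \<le> T \<Longrightarrow> l \<in> I \<Longrightarrow> ((\<lambda>s. u s l) has_real_derivative u' s l) (at s)"
    and init: "\<And>l. l \<in> I \<Longrightarrow> u 0 l \<ge> 0"
    and quasi: "\<And>s l a. 0 < s \<Longrightarrow> s \<le> T \<Longrightarrow> l \<in> I \<Longrightarrow> a > 0 \<Longrightarrow> (\<And>j. j \<in> I \<Longrightarrow> u s j \<ge> -a)
      \<Longrightarrow> u s l = -a \<Longrightarrow> u' s l \<ge> - C * a"
    and s: "s \<in> {0..T}" and l: "l \<in> I"
  shows "u s l \<ge> 0"
proof (rule ccontr)
  assume "\<not> u s l \<ge> 0"
  define e where "e = - u s l / (2 * exp ((C + 1) * s))"
  have e: "e > 0" using \<open>\<not> u s l \<ge> 0\<close> unfolding e_def by (intro divide_pos_pos) auto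
  define v where "v l s = u s l + e * exp ((C + 1) * s)" for l s
  have "v l s = u s l / 2" by (simp add: v_def e_def)
  then have "v l s \<le> 0" using \<open>\<not> u s l \<ge> 0\<close> by simp
  moreover have "continuous_on {0..T} (v l)" if "l \<in> I" for l
    unfolding v_def by (intro continuous_intros cont that)
  moreover have "v l 0 > 0" if "l \<in> I" for l using init[OF that] e by (simp add: v_def)
  ultimately obtain t k where t: "0 < t" "t \<le> T" and k: "k \<in> I" "v k t \<le> 0"
    and below: "\<And>j r. j \<in> I \<Longrightarrow> 0 \<le> r \<Longrightarrow> r < t \<Longrightarrow> v j r > 0"
    using first_nonpositive_time[OF I _ _ s l] by metis
  have vder: "(v j has_real_derivative u' t j + e * (exp ((C + 1) * t) * (C + 1))) (at t)" if "j \<in> I" for j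
    unfolding v_def by (rule derivative_eq_intros deriv[OF t] | use that in simp)+
  have vt: "v j t \<ge> 0" if j: "j \<in> I" for j
  proof -
    have "(v j \<longlongrightarrow> v j t) (at_left t)"
      using DERIV_isCont[OF vder[OF j]] filterlim_at_split by (auto simp: isCont_def)
    moreover have "eventually (\<lambda>r. 0 \<le> v j r) (at_left t)"
      using eventually_at_left_real[OF t(1)]
    proof eventually_elim
      case (elim r) then show ?case using below[of j r] j by auto
    qed
    ultimately show ?thesis by (rule tendsto_lowerbound) simp
  qed
  define d where "d = e * exp ((C + 1) * t)"
  have d: "d > 0" using e by (simp add: d_def)
  have "u t j \<ge> -d" if "j \<in> I" for j using vt[OF that] unfolding v_def d_def by linarith
  moreover have "u t k = -d" using vt[OF k(1)] k(2) unfolding v_def d_def by linarith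
  ultimately have "u' t k \<ge> - C * d" by (intro quasi[OF t k(1) d]) auto
  then have "u' t k + e * (exp ((C + 1) * t) * (C + 1)) > 0"
    using d by (simp add: d_def algebra_simps)
  then obtain h where h: "h > 0" "\<And>r. r > 0 \<Longrightarrow> r < h \<Longrightarrow> v k (t - r) < v k t"
    using DERIV_pos_inc_left[OF vder[OF k(1)]] by blast
  define r where "r = min (h / 2) (t / 2)"
  have "v k (t - r) < v k t" using h t by (intro h(2)) (auto simp: r_def)
  moreover have "v k (t - r) > 0" using h t by (intro below k(1)) (auto simp: r_def)
  ultimately show False using k(2) by simp
qed

lemma mult_ge_of_lower_bounds:
  fixes x y a b K :: real
  assumes "x \<ge> -a" "y \<ge> -b" "\<bar>x\<bar> \<le> K" "\<bar>y\<bar> \<le> K" "a \<ge> 0" "b \<ge> 0"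
  shows "x * y \<ge> -((a + b) * K)"
proof -
  have "K \<ge> 0" using assms(3) by linarith
  then have nn: "(a + b) * K \<ge> 0" using assms(5,6) by simp
  consider "x \<ge> 0" "y \<ge> 0" | "x \<ge> 0" "y < 0" | "x < 0" "y \<ge> 0" | "x < 0" "y < 0" by linarith
  then show ?thesis
  proof cases
    case 2
    have "x * y \<ge> x * (-b)" using assms(2) 2 by (intro mult_left_mono) auto
    moreover have "x * b \<le> K * b" using assms(3,6) 2 by (intro mult_right_mono) auto
    moreover have "(a + b) * K = a * K + K * b" "a * K \<ge> 0" using \<open>K \<ge> 0\<close> assms(5)
      by (simp_all add: algebra_simps)
    ultimately show ?thesis by simp
  next
    case 3
    have "x * y \<ge> (-a) * y" using assms(1) 3 by (intro mult_right_mono) auto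
    moreover have "a * y \<le> a * K" using assms(4,5) 3 by (intro mult_left_mono) auto
    moreover have "(a + b) * K = a * K + b * K" "b * K \<ge> 0" using \<open>K \<ge> 0\<close> assms(6)
      by (simp_all add: algebra_simps)
    ultimately show ?thesis by simp
  qed (use nn mult_nonneg_nonneg[of x y] mult_nonpos_nonpos[of x y] in linarith)+
qed

text \<open>The setting of the quasi-positivity argument: one component touches the level \<open>-a\<close>
  while all others stay above it.\<close>

lemma flux_ge_at_touching:
  fixes g r N a K u1 uk m :: real
  assumes g: "g > 0" and r: "r > 0" and a: "a \<ge> 0" and m: "m \<ge> 0"
    and u1: "u1 \<ge> -a" "\<bar>u1\<bar> \<le> K" and uk: "uk \<ge> -a" "\<bar>uk\<bar> \<le> K" and N: "\<bar>N\<bar> \<le> K"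
  shows "g * (u1 * uk - N * r * (-a)) \<ge> -(g * (1 + r) * (m + 2) * K * a)"
proof -
  have K: "K \<ge> 0" using N by linarith
  have "u1 * uk \<ge> -((a + a) * K)" by (rule mult_ge_of_lower_bounds[OF u1(1) uk(1) u1(2) uk(2) a a])
  moreover have "(r * a) * N \<ge> (r * a) * (-K)" using N r a by (intro mult_left_mono) auto
  ultimately have "u1 * uk - N * r * (-a) \<ge> -((2 + r) * (K * a))" by (simp add: algebra_simps)
  moreover have "(2 + r) * (K * a) \<le> ((1 + r) * (m + 2)) * (K * a)"
    using K a r m by (intro mult_right_mono) (auto simp: algebra_simps)
  ultimately have "g * (u1 * uk - N * r * (-a)) \<ge> g * (-((1 + r) * (m + 2) * K * a))"
    using g by (intro mult_left_mono) (auto simp: mult_ac)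
  then show ?thesis by (simp add: mult_ac)
qed

lemma neg_flux_ge_at_touching:
  fixes g r N a K u1 uk uk1 m :: real
  assumes g: "g > 0" and r: "r > 0" and a: "a \<ge> 0" and m: "m \<ge> 0"
    and touch: "u1 = -a \<or> uk = -a" and u1: "\<bar>u1\<bar> \<le> K" and uk: "\<bar>uk\<bar> \<le> K"
    and uk1: "uk1 \<ge> -a" "\<bar>uk1\<bar> \<le> K" and N: "N \<ge> -(m * a)" "\<bar>N\<bar> \<le> K"
  shows "- (g * (u1 * uk - N * r * uk1)) \<ge> -(g * (1 + r) * (m + 2) * K * a)"
proof -
  have K: "K \<ge> 0" using u1 by linarith
  have "N * uk1 \<ge> -((m * a + a) * K)"
    by (rule mult_ge_of_lower_bounds[OF N(1) uk1(1) N(2) uk1(2)]) (use a m in auto)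
  then have "r * (N * uk1) \<ge> r * (-((m * a + a) * K))" using r by (intro mult_left_mono) auto
  moreover have "- (u1 * uk) \<ge> -(a * K)"
  proof -
    have "a * (-K) \<le> a * uk" "a * (-K) \<le> a * u1" using u1 uk a by (intro mult_left_mono; linarith)+
    then show ?thesis using touch by (auto simp: algebra_simps)
  qed
  ultimately have "- (u1 * uk - N * r * uk1) \<ge> -((1 + r * (m + 1)) * (K * a))"
    by (simp add: algebra_simps)
  moreover have "(1 + r * (m + 1)) * (K * a) \<le> ((1 + r) * (m + 2)) * (K * a)"
    using K a r m by (intro mult_right_mono) (auto simp: algebra_simps)
  ultimately have "g * (- (u1 * uk - N * r * uk1)) \<ge> g * (-((1 + r) * (m + 2) * K * a))"
    using g by (intro mult_left_mono) (auto simp: mult_ac)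
  then show ?thesis by (simp only: mult_minus_right mult.assoc)
qed

lemma truncated_rate_ge:
  fixes J w :: "nat \<Rightarrow> real"
  assumes m: "m \<ge> 2" and l: "l \<in> {1..m}" and w: "\<And>k. k \<in> {1..<m} \<Longrightarrow> w k \<ge> 0"
    and in_ge: "\<And>k. k \<in> {1..<m} \<Longrightarrow> Suc k = l \<Longrightarrow> J k \<ge> - w k"
    and out_ge: "\<And>k. k \<in> {1..<m} \<Longrightarrow> l = 1 \<or> k = l \<Longrightarrow> - J k \<ge> - w k"
  shows "truncated_rate m J l \<ge> - (2 * (\<Sum>k\<in>{1..<m}. w k))"
proof -
  have w_le: "w k \<le> (\<Sum>k\<in>{1..<m}. w k)" if "k \<in> {1..<m}" for k
    using that w by (intro member_le_sum) auto
  have W: "(\<Sum>k\<in>{1..<m}. w k) \<ge> 0" using w by (intro sum_nonneg) auto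
  consider "l = 1" | "l = m" "l \<noteq> 1" | "l \<noteq> 1" "l \<noteq> m" by blast
  then show ?thesis
  proof cases
    case 1
    have "(\<Sum>k\<in>{1..<m}. - w k) \<le> (\<Sum>k\<in>{1..<m}. - J k)" using 1 by (intro sum_mono out_ge) auto
    then show ?thesis
      using 1 m out_ge[of 1] w_le[of 1] by (simp add: truncated_rate_def sum_negf)
  next
    case 2
    have k: "m - 1 \<in> {1..<m}" "Suc (m - 1) = m" using m by auto
    then show ?thesis using 2 in_ge[OF k(1)] w_le[OF k(1)] W by (simp add: truncated_rate_def)
  next
    case 3
    have k: "l - 1 \<in> {1..<m}" "l \<in> {1..<m}" "Suc (l - 1) = l" using l 3 by auto
    then have "truncated_rate m J l = J (l - 1) - J l" using 3 by (simp add: truncated_rate_def)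
    then show ?thesis using in_ge[OF k(1,3)] out_ge[OF k(2)] w_le[OF k(1)] w_le[OF k(2)] by simp
  qed
qed

lemma truncated_rate_ge_at_touching:
  fixes u :: "nat \<Rightarrow> real"
  assumes m: "m \<ge> 2" and gam: "\<forall>k\<ge>1. gam k > 0" and q: "\<forall>k\<ge>1. q k > 0" and a: "a \<ge> 0"
    and u: "\<And>j. j \<in> {1..m} \<Longrightarrow> -a \<le> u j \<and> \<bar>u j\<bar> \<le> K" and N: "-(real m * a) \<le> N" "\<bar>N\<bar> \<le> K"
    and l: "l \<in> {1..m}" "u l = -a"
  defines "W \<equiv> (\<Sum>k\<in>{1..<m}. gam k * (1 + q k / q (Suc k)) * (real m + 2) * K)"
  shows "truncated_rate m (\<lambda>k. gam k * (u 1 * u k - N * q k / q (Suc k) * u (Suc k))) l \<ge> - (2 * W * a)"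
proof -
  define w where "w k = gam k * (1 + q k / q (Suc k)) * (real m + 2) * K * a" for k
  have K: "K \<ge> 0" using u[of 1] m by force
  have gk: "gam k > 0" and rk: "q k / q (Suc k) > 0" if "k \<ge> 1" for k
    using gam q that by auto
  have "truncated_rate m (\<lambda>k. gam k * (u 1 * u k - N * (q k / q (Suc k)) * u (Suc k))) l
      \<ge> - (2 * (\<Sum>k\<in>{1..<m}. w k))"
  proof (rule truncated_rate_ge[OF m l(1)])
    show "w k \<ge> 0" if "k \<in> {1..<m}" for k
    proof -
      have "gam k > 0" "q k / q (Suc k) > 0" using that gk rk by auto
      then show ?thesis unfolding w_def using K a by simp
    qed
    show "gam k * (u 1 * u k - N * (q k / q (Suc k)) * u (Suc k)) \<ge> - w k"
      if k: "k \<in> {1..<m}" and "Suc k = l" for k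
    proof -
      have "gam k * (u 1 * u k - N * (q k / q (Suc k)) * (-a))
          \<ge> -(gam k * (1 + q k / q (Suc k)) * (real m + 2) * K * a)"
        by (rule flux_ge_at_touching) (use gk rk a k m u[of 1] u[of k] N(2) in auto)
      then show ?thesis using that l unfolding w_def by (simp add: mult_ac)
    qed
    show "- (gam k * (u 1 * u k - N * (q k / q (Suc k)) * u (Suc k))) \<ge> - w k"
      if k: "k \<in> {1..<m}" and "l = 1 \<or> k = l" for k
    proof -
      have "u 1 = -a \<or> u k = -a" using that l by auto
      then have "- (gam k * (u 1 * u k - N * (q k / q (Suc k)) * u (Suc k)))
          \<ge> -(gam k * (1 + q k / q (Suc k)) * (real m + 2) * K * a)"
        by (intro neg_flux_ge_at_touching) (use gk rk a k m u[of 1] u[of k] u[of "Suc k"] N in auto)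
      then show ?thesis unfolding w_def by (simp add: mult_ac)
    qed
  qed
  moreover have "(\<Sum>k\<in>{1..<m}. w k) = W * a" unfolding W_def w_def by (simp add: sum_distrib_right)
  ultimately show ?thesis by (simp add: mult_ac)
qed
lemma exp_weighted_less:
  fixes f f' :: "real \<Rightarrow> real"
  assumes t: "t > 0" and cont: "continuous_on {0..t} f"
    and der: "\<And>x. 0 < x \<Longrightarrow> x < t \<Longrightarrow> (f has_real_derivative f' x) (at x)"
    and pos: "\<And>x. 0 < x \<Longrightarrow> x < t \<Longrightarrow> f' x + G * f x > 0"
  shows "f 0 < exp (G * t) * f t"
proof -
  have "(\<lambda>x. exp (G * x) * f x) 0 < (\<lambda>x. exp (G * x) * f x) t"
  proof (rule DERIV_pos_imp_increasing_open[of 0 t "\<lambda>x. exp (G * x) * f x", OF t])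
    fix x assume x: "0 < x" "x < t"
    have "((\<lambda>x. exp (G * x) * f x) has_real_derivative exp (G * x) * (f' x + G * f x)) (at x)"
      by (rule derivative_eq_intros der[OF x] | simp add: algebra_simps)+
    then show "\<exists>y. ((\<lambda>x. exp (G * x) * f x) has_real_derivative y) (at x) \<and> 0 < y"
      using pos[OF x] by auto
  qed (intro continuous_intros cont)
  then show ?thesis by simp
qed

lemma exp_weighted_le:
  fixes f f' :: "real \<Rightarrow> real"
  assumes t: "t > 0" and cont: "continuous_on {0..t} f"
    and der: "\<And>x. 0 < x \<Longrightarrow> x < t \<Longrightarrow> (f has_real_derivative f' x) (at x)"
    and nonneg: "\<And>x. 0 < x \<Longrightarrow> x < t \<Longrightarrow> f' x + G * f x \<ge> 0"
  shows "f 0 \<le> exp (G * t) * f t"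
proof -
  have "(\<lambda>x. exp (G * x) * f x) 0 \<le> (\<lambda>x. exp (G * x) * f x) t"
  proof (rule DERIV_nonneg_imp_increasing_open[of 0 t "\<lambda>x. exp (G * x) * f x"])
    fix x assume x: "0 < x" "x < t"
    have "((\<lambda>x. exp (G * x) * f x) has_real_derivative exp (G * x) * (f' x + G * f x)) (at x)"
      by (rule derivative_eq_intros der[OF x] | simp add: algebra_simps)+
    then show "\<exists>y. ((\<lambda>x. exp (G * x) * f x) has_real_derivative y) (at x) \<and> 0 \<le> y"
      using nonneg[OF x] by auto
  next
    show "continuous_on {0..t} (\<lambda>x. exp (G * x) * f x)" by (intro continuous_intros cont)
  qed (use t in simp)
  then show ?thesis by simp
qed

lemma square_sqrt_diff_le_mult_ln_diff:
  fixes a b :: real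
  assumes "a > 0" "b > 0"
  shows "(sqrt a - sqrt b) ^ 2 \<le> (a - b) * (ln a - ln b)"
proof -
  have *: "(sqrt a - sqrt b) ^ 2 \<le> (a - b) * (ln a - ln b)" if b: "b > 0" and ab: "b \<le> a" for a b :: real
  proof -
    have a: "a > 0" using ab b by simp
    have "ln b - ln a \<le> b / a - 1" using ln_le_minus_one[of "b / a"] a b by (simp add: ln_div)
    then have "(a - b) / a \<le> ln a - ln b" using a by (simp add: field_simps)
    then have "(a - b) * ((a - b) / a) \<le> (a - b) * (ln a - ln b)" using ab by (intro mult_left_mono) auto
    moreover have "(sqrt a - sqrt b) ^ 2 \<le> (a - b) * ((a - b) / a)"
    proof -
      define sa sb where "sa = sqrt a" and "sb = sqrt b"
      have sa: "sa > 0" "sa * sa = a" and sb: "sb > 0" "sb * sb = b" using a b by (auto simp: sa_def sb_def)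
      have "(sa - sb) ^ 2 * (sa * sa) \<le> (sa - sb) ^ 2 * ((sa + sb) * (sa + sb))"
        using sa sb by (intro mult_left_mono) (auto simp: algebra_simps)
      also have "\<dots> = (a - b) * (a - b)" using sa(2) sb(2) by (simp add: power2_eq_square algebra_simps)
      finally have "(sa - sb) ^ 2 * a \<le> (a - b) * (a - b)" using sa(2) by simp
      then show ?thesis using a unfolding sa_def sb_def by (simp add: field_simps)
    qed
    ultimately show ?thesis by linarith
  qed
  show ?thesis
    using *[of b a] *[of a b] assms by (cases "b \<le> a") (auto simp: power2_commute algebra_simps)
qed

text \<open>With \<open>a = z\<^sub>1 z\<^sub>k\<close> and \<open>b = N q\<^sub>k / q\<^sub>k\<^sub>+\<^sub>1 z\<^sub>k\<^sub>+\<^sub>1\<close>, this bounds the \<open>k\<close>-th term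
  \<open>\<gamma>\<^sub>k (a - b) (ln a - ln b)\<close> of the entropy dissipation from below and vanishes exactly
  when the flux \<open>J\<^sub>k\<close> does.\<close>

definition sqrt_dissipation :: "(nat \<Rightarrow> real) \<Rightarrow> (nat \<Rightarrow> real) \<Rightarrow> (nat \<Rightarrow> real) \<Rightarrow> nat \<Rightarrow> real" where
  "sqrt_dissipation gam q z k =
     gam k * (sqrt (z 1 * z k) - sqrt (Ntot z * q k / q (Suc k) * z (Suc k))) ^ 2"

lemma sqrt_dissipation_nonneg: "gam k > 0 \<Longrightarrow> sqrt_dissipation gam q z k \<ge> 0"
  unfolding sqrt_dissipation_def by simp

lemma sum_half_power_le_2: "(\<Sum>l\<in>{1..m}. (1/2::real) ^ l) \<le> 2"
proof -
  have "(\<Sum>l\<in>{1..m}. (1/2::real) ^ l) \<le> (\<Sum>l<Suc m. (1/2::real) ^ l)"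
    by (rule sum_mono2) auto
  also have "\<dots> = 2 - (1/2) ^ m" by (simp add: sum_gp_strict)
  finally show ?thesis using zero_le_power[of "1/2::real" m] by linarith
qed

locale truncated_system =
  fixes gam q y :: "nat \<Rightarrow> real" and m :: nat and u :: "real \<Rightarrow> nat \<Rightarrow> real"
  assumes m2: "m \<ge> 2" and solution: "truncated_solution gam q y m u"
    and gam_pos: "\<forall>l\<ge>1. gam l > 0" and q_pos: "\<forall>l\<ge>1. q l > 0" and q1: "q 1 = 1"
    and y: "y \<in> X0p" and y1: "y 1 > 0"
begin

definition total :: "real \<Rightarrow> real" where "total t = (\<Sum>l\<in>{1..m}. u t l)"

definition flux :: "real \<Rightarrow> nat \<Rightarrow> real" where
  "flux t k = gam k * (u t 1 * u t k - total t * q k / q (Suc k) * u t (Suc k))"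

definition rate :: "real \<Rightarrow> nat \<Rightarrow> real" where "rate t = truncated_rate m (flux t)"

definition mass0 :: real where "mass0 = (\<Sum>l\<in>{1..m}. real l * y l)"

lemma u_outside: "t \<ge> 0 \<Longrightarrow> l = 0 \<or> l > m \<Longrightarrow> u t l = 0"
  using solution unfolding truncated_solution_def by blast

lemma u_0: "1 \<le> l \<Longrightarrow> l \<le> m \<Longrightarrow> u 0 l = y l"
  using solution unfolding truncated_solution_def by blast

lemma Ntot_u: "t \<ge> 0 \<Longrightarrow> Ntot (u t) = total t"
  unfolding Ntot_def total_def by (rule suminf_finite) (use u_outside in \<open>auto simp: not_le\<close>)

lemma Jflux_u: "t \<ge> 0 \<Longrightarrow> k \<ge> 1 \<Longrightarrow> Jflux gam q (u t) k = flux t k"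
  using Ntot_u by (simp add: Jflux_def flux_def)

lemma u_has_derivative:
  assumes t: "t \<ge> 0" and l: "1 \<le> l" "l \<le> m"
  shows "((\<lambda>s. u s l) has_real_derivative rate t l) (at t within {0..})"
proof -
  have D: "((\<lambda>s. u s 1) has_real_derivative (- Jflux gam q (u t) 1 - (\<Sum>k=1..m-1. Jflux gam q (u t) k)))
        (at t within {0..})"
      "\<And>l. 2 \<le> l \<and> l \<le> m - 1 \<Longrightarrow>
        ((\<lambda>s. u s l) has_real_derivative (Jflux gam q (u t) (l - 1) - Jflux gam q (u t) l)) (at t within {0..})"
      "((\<lambda>s. u s m) has_real_derivative Jflux gam q (u t) (m - 1)) (at t within {0..})"
    using solution t unfolding truncated_solution_def by blast+
  have "(\<Sum>k=1..m-1. Jflux gam q (u t) k) = (\<Sum>k\<in>{1..<m}. flux t k)"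
    using m2 t by (intro sum.cong) (auto simp: Jflux_u)
  moreover have "Jflux gam q (u t) (l - 1) = flux t (l - 1)" if "l \<ge> 2"
    using t that by (simp add: Jflux_u)
  ultimately show ?thesis
    using D(1) D(2)[of l] D(3) l m2 t by (cases "l = 1"; cases "l = m") (auto simp: rate_def truncated_rate_def Jflux_u)
qed

lemma u_has_derivative_at:
  assumes t: "t > 0" and l: "1 \<le> l" "l \<le> m"
  shows "((\<lambda>s. u s l) has_real_derivative rate t l) (at t)"
proof -
  have "((\<lambda>s. u s l) has_real_derivative rate t l) (at t within {0..t+1})"
    by (rule has_field_derivative_subset[OF u_has_derivative]) (use t l in auto)
  moreover have "at t within {0..t+1} = at t" by (rule at_within_Icc_at) (use t in auto)
  ultimately show ?thesis by simp
qed

lemma continuous_on_u: "continuous_on {0..} (\<lambda>s. u s l)"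
proof (cases "1 \<le> l \<and> l \<le> m")
  case True
  then show ?thesis by (intro DERIV_continuous_on[where D = "\<lambda>t. rate t l"] u_has_derivative) auto
next
  case False
  then show ?thesis using continuous_on_cong[of "{0..}" "{0..}" "\<lambda>s. u s l" "\<lambda>_. 0"] u_outside by auto
qed

lemma continuous_on_total: "continuous_on {0..} total"
  unfolding total_def by (intro continuous_on_sum continuous_on_u)

lemma mass_conserved:
  assumes "t \<ge> 0" shows "(\<Sum>l\<in>{1..m}. real l * u t l) = mass0"
proof -
  have "((\<lambda>s. \<Sum>l\<in>{1..m}. real l * u s l) has_field_derivative 0) (at x within {0..})" if "x \<ge> 0" for x
  proof -
    have "((\<lambda>s. \<Sum>l\<in>{1..m}. real l * u s l) has_field_derivative (\<Sum>l\<in>{1..m}. real l * rate x l))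
        (at x within {0..})"
      by (intro DERIV_sum DERIV_cmult u_has_derivative) (use that in auto)
    then show ?thesis unfolding rate_def sum_mult_truncated_rate[OF m2] by simp
  qed
  then obtain c where "\<forall>x\<in>{0..}. (\<Sum>l\<in>{1..m}. real l * u x l) = c"
    using has_field_derivative_zero_constant[OF convex_real_interval(1)] by force
  then show ?thesis using assms by (force simp: mass0_def u_0)
qed

lemma u_bounded:
  assumes T: "T \<ge> 0"
  obtains K where "\<And>s j. s \<in> {0..T} \<Longrightarrow> j \<in> {1..m} \<Longrightarrow> \<bar>u s j\<bar> \<le> K"
    "\<And>s. s \<in> {0..T} \<Longrightarrow> \<bar>total s\<bar> \<le> K"
proof -
  define f where "f s = (\<Sum>j\<in>{1..m}. \<bar>u s j\<bar>)" for s
  have "continuous_on {0..T} f" unfolding f_def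
    by (intro continuous_on_sum continuous_intros continuous_on_subset[OF continuous_on_u]) auto
  then obtain x where x: "\<forall>s\<in>{0..T}. f s \<le> f x"
    using continuous_attains_sup[of "{0..T}" f] T by auto
  have "\<bar>u s j\<bar> \<le> f s" if "j \<in> {1..m}" for s j
    unfolding f_def by (rule member_le_sum) (use that in auto)
  moreover have "\<bar>total s\<bar> \<le> f s" for s unfolding total_def f_def by (rule sum_abs)
  ultimately show ?thesis using x that[of "f x"] by (meson order_trans)
qed

lemma u_nonneg:
  assumes t: "t \<ge> 0" shows "u t l \<ge> 0"
proof (cases "1 \<le> l \<and> l \<le> m")
  case False
  then show ?thesis using u_outside[OF t] by (auto simp: not_le)
next
  case True
  obtain K where K: "\<And>s j. s \<in> {0..t + 1} \<Longrightarrow> j \<in> {1..m} \<Longrightarrow> \<bar>u s j\<bar> \<le> K"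
    "\<And>s. s \<in> {0..t + 1} \<Longrightarrow> \<bar>total s\<bar> \<le> K"
    using u_bounded[of "t + 1"] t by auto
  show ?thesis
  proof (rule nonneg_of_quasi_positive[where u = u and I = "{1..m}" and T = "t + 1" and u' = rate])
    show "continuous_on {0..t + 1} (\<lambda>s. u s j)" if "j \<in> {1..m}" for j
      by (rule continuous_on_subset[OF continuous_on_u]) auto
    show "((\<lambda>s. u s j) has_real_derivative rate s j) (at s)" if "0 < s" "s \<le> t + 1" "j \<in> {1..m}" for s j
      using u_has_derivative_at that by auto
    show "u 0 j \<ge> 0" if "j \<in> {1..m}" for j using that u_0 X0pD(2)[OF y] by auto
    fix s j a assume s: "0 < s" "s \<le> t + 1" and j: "j \<in> {1..m}" and a: "a > 0"
      and above: "\<And>i. i \<in> {1..m} \<Longrightarrow> u s i \<ge> -a" and touch: "u s j = -a"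
    have "total s \<ge> (\<Sum>i\<in>{1..m}. -a)" unfolding total_def by (intro sum_mono above)
    then have "-(real m * a) \<le> total s" by simp
    moreover have "\<bar>u s i\<bar> \<le> K" "\<bar>total s\<bar> \<le> K" if "i \<in> {1..m}" for i
      using K s that by auto
    ultimately show "rate s j \<ge> - (2 * (\<Sum>k\<in>{1..<m}. gam k * (1 + q k / q (Suc k)) * (real m + 2) * K)) * a"
      unfolding rate_def flux_def
      using truncated_rate_ge_at_touching[OF m2 gam_pos q_pos _ _ _ _ j, where u = "u s" and N = "total s"]
        above a touch j by simp
  qed (use t True in auto)
qed

lemma mass0_le_rho: "mass0 \<le> rho y"
  using sum_le_suminf[of "\<lambda>l. real l * y l" "{1..m}"] X0pD[OF y] by (simp add: mass0_def rho_def)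

lemma mass0_nonneg: "mass0 \<ge> 0"
  unfolding mass0_def using X0pD(2)[OF y] by (intro sum_nonneg mult_nonneg_nonneg) auto

lemma u_le_mass0:
  assumes t: "t \<ge> 0" and j: "j \<in> {1..m}" shows "u t j \<le> mass0"
proof -
  have "u t j \<le> real j * u t j" using j u_nonneg[OF t] by (intro le_of_nat_mult_self) auto
  also have "\<dots> \<le> (\<Sum>l\<in>{1..m}. real l * u t l)"
    by (rule member_le_sum) (use j u_nonneg[OF t] in auto)
  finally show ?thesis using mass_conserved[OF t] by simp
qed

lemma total_nonneg: "t \<ge> 0 \<Longrightarrow> total t \<ge> 0"
  unfolding total_def by (intro sum_nonneg u_nonneg)

lemma total_le_mass0:
  assumes t: "t \<ge> 0" shows "total t \<le> mass0"
proof -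
  have "total t \<le> (\<Sum>l\<in>{1..m}. real l * u t l)"
    unfolding total_def by (intro sum_mono le_of_nat_mult_self) (use u_nonneg[OF t] in auto)
  then show ?thesis using mass_conserved[OF t] by simp
qed

lemma u_X0p: assumes t: "t \<ge> 0" shows "u t \<in> X0p"
proof -
  have "summable (\<lambda>l. real l * \<bar>u t l\<bar>)"
    by (rule summable_finite[of "{1..m}"]) (use u_outside[OF t] in \<open>auto simp: not_le\<close>)
  then show ?thesis using u_outside[OF t, of 0] u_nonneg[OF t] by (auto simp: X0p_def Xsp_def)
qed

lemma rho_u: assumes t: "t \<ge> 0" shows "rho (u t) = mass0"
proof -
  have "rho (u t) = (\<Sum>l\<in>{1..m}. real l * u t l)"
    unfolding rho_def by (rule suminf_finite) (use u_outside[OF t] in \<open>auto simp: not_le\<close>)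
  then show ?thesis using mass_conserved[OF t] by simp
qed

lemma u_mass_ball: "t \<ge> 0 \<Longrightarrow> u t \<in> mass_ball (rho y)"
  using u_X0p rho_u mass0_le_rho by (simp add: mass_ball_def)

lemma flux_le:
  assumes x: "x \<ge> 0" and k: "k \<ge> 1" shows "flux x k \<le> gam k * (u x 1 * u x k)"
proof -
  have "q k > 0" "q (Suc k) > 0" using q_pos k by auto
  then have "total x * q k / q (Suc k) * u x (Suc k) \<ge> 0" using total_nonneg[OF x] u_nonneg[OF x] by simp
  then show ?thesis unfolding flux_def using gam_pos k by (simp add: mult_left_mono)
qed

lemma flux_ge:
  assumes x: "x \<ge> 0" and k: "k \<ge> 1"
  shows "flux x k \<ge> gam k * (u x 1 * u x k) - gam k * (q k / q (Suc k)) * mass0 * u x (Suc k)"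
proof -
  have "q k / q (Suc k) > 0" using q_pos k by simp
  then have "total x * (q k / q (Suc k)) * u x (Suc k) \<le> mass0 * (q k / q (Suc k)) * u x (Suc k)"
    using total_le_mass0[OF x] u_nonneg[OF x] by (intro mult_right_mono) auto
  then have "gam k * (total x * (q k / q (Suc k)) * u x (Suc k)) \<le> gam k * (mass0 * (q k / q (Suc k)) * u x (Suc k))"
    using gam_pos k by (intro mult_left_mono) auto
  then show ?thesis by (simp add: flux_def algebra_simps)
qed

text \<open>Monomers are lost at rate at most \<open>(\<gamma>\<^sub>1 + \<Sum> \<gamma>\<^sub>k) mass0 u\<^sub>1\<close>, and \<open>u\<^sub>l\<^sub>+\<^sub>1\<close> is fed by
  the positive flux \<open>\<gamma>\<^sub>l u\<^sub>1 u\<^sub>l\<close>; a Gronwall argument carries positivity up the chain.\<close>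

lemma rate_1_ge:
  assumes x: "x \<ge> 0" shows "rate x 1 + (gam 1 + (\<Sum>k\<in>{1..<m}. gam k)) * mass0 * u x 1 \<ge> 0"
proof -
  have "flux x k \<le> gam k * mass0 * u x 1" if k: "k \<in> {1..m}" for k
  proof -
    have "u x 1 * u x k \<le> u x 1 * mass0"
      by (rule mult_left_mono[OF u_le_mass0[OF x k] u_nonneg[OF x]])
    moreover have "gam k \<ge> 0" using gam_pos k by (simp add: less_imp_le)
    ultimately have "gam k * (u x 1 * u x k) \<le> gam k * (u x 1 * mass0)" by (rule mult_left_mono)
    then show ?thesis using flux_le[OF x, of k] k by (simp add: mult_ac)
  qed
  then have "- (gam 1 * mass0 * u x 1) - (\<Sum>k\<in>{1..<m}. gam k * mass0 * u x 1)
      \<le> - flux x 1 - (\<Sum>k\<in>{1..<m}. flux x k)"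
    using m2 by (intro diff_mono sum_mono) auto
  moreover have "(\<Sum>k\<in>{1..<m}. gam k * mass0 * u x 1) = (\<Sum>k\<in>{1..<m}. gam k) * mass0 * u x 1"
    by (simp add: sum_distrib_right)
  ultimately show ?thesis by (simp add: rate_def truncated_rate_def algebra_simps)
qed

lemma rate_Suc_ge:
  assumes x: "x \<ge> 0" and l: "1 \<le> l" "l < m"
  shows "rate x (Suc l) + (gam l * (q l / q (Suc l)) + gam (Suc l)) * mass0 * u x (Suc l)
    \<ge> gam l * (u x 1 * u x l)"
proof -
  have "gam (Suc l) * (u x 1 * u x (Suc l)) \<le> gam (Suc l) * (mass0 * u x (Suc l))"
    using u_le_mass0[OF x, of 1] m2 u_nonneg[OF x] gam_pos[rule_format, of "Suc l"]
    by (intro mult_left_mono mult_right_mono) auto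
  then have "flux x (Suc l) \<le> gam (Suc l) * mass0 * u x (Suc l)"
    using flux_le[OF x, of "Suc l"] by (simp add: mult_ac)
  moreover have "gam (Suc l) * mass0 * u x (Suc l) \<ge> 0"
    using gam_pos[rule_format, of "Suc l"] mass0_nonneg u_nonneg[OF x, of "Suc l"] by simp
  moreover have "rate x (Suc l) = (if Suc l = m then flux x l else flux x l - flux x (Suc l))"
    using l by (auto simp: rate_def truncated_rate_def)
  ultimately show ?thesis using flux_ge[OF x l(1)] by (auto simp: algebra_simps)
qed

lemma u_1_pos: assumes t: "t \<ge> 0" shows "u t 1 > 0"
proof (cases "t = 0")
  case True then show ?thesis using u_0[of 1] y1 m2 by simp
next
  case False
  then have t0: "t > 0" using t by simp
  define G where "G = (gam 1 + (\<Sum>k\<in>{1..<m}. gam k)) * mass0"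
  have "u 0 1 \<le> exp (G * t) * u t 1"
  proof (rule exp_weighted_le[OF t0, where f' = "\<lambda>x. rate x 1"])
    show "continuous_on {0..t} (\<lambda>s. u s 1)" by (rule continuous_on_subset[OF continuous_on_u]) auto
    show "((\<lambda>s. u s 1) has_real_derivative rate x 1) (at x)" if "0 < x" for x
      by (rule u_has_derivative_at[OF that]) (use m2 in auto)
    show "rate x 1 + G * u x 1 \<ge> 0" if "0 < x" for x
      using rate_1_ge[of x] that by (simp add: G_def mult.assoc)
  qed
  then have "exp (G * t) * u t 1 > 0" using u_0[of 1] y1 m2 by simp
  then show ?thesis by (simp add: zero_less_mult_iff)
qed

lemma u_pos: assumes t: "t > 0" and l: "1 \<le> l" "l \<le> m" shows "u t l > 0"
  using l t
proof (induction l arbitrary: t rule: nat_induct_at_least)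
  case base
  then show ?case using u_1_pos by simp
next
  case (Suc l)
  define G where "G = (gam l * (q l / q (Suc l)) + gam (Suc l)) * mass0"
  have "u 0 (Suc l) < exp (G * t) * u t (Suc l)"
  proof (rule exp_weighted_less[OF Suc.prems(2), where f' = "\<lambda>x. rate x (Suc l)"])
    show "continuous_on {0..t} (\<lambda>s. u s (Suc l))" by (rule continuous_on_subset[OF continuous_on_u]) auto
    show "((\<lambda>s. u s (Suc l)) has_real_derivative rate x (Suc l)) (at x)" if "0 < x" for x
      by (rule u_has_derivative_at[OF that]) (use Suc in auto)
    show "rate x (Suc l) + G * u x (Suc l) > 0" if "0 < x" for x
    proof -
      have "gam l * (u x 1 * u x l) > 0"
        using gam_pos Suc u_1_pos[of x] Suc.IH[of x] that by simp
      then show ?thesis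
        using rate_Suc_ge[of x l] Suc that by (simp add: G_def mult.assoc)
    qed
  qed
  then have "exp (G * t) * u t (Suc l) > 0" using u_nonneg[of 0 "Suc l"] by simp
  then show ?case by (simp add: zero_less_mult_iff)
qed

lemma total_pos: assumes t: "t \<ge> 0" shows "total t > 0"
proof -
  have "u t 1 \<le> total t" unfolding total_def by (rule member_le_sum) (use m2 u_nonneg[OF t] in auto)
  then show ?thesis using u_1_pos[OF t] by simp
qed

definition free_energy :: "real \<Rightarrow> real" where
  "free_energy t = (\<Sum>l\<in>{1..m}. xlnx (u t l) - u t l * ln (q l)) - xlnx (total t)"

definition dissipation :: "real \<Rightarrow> real" where
  "dissipation t = (\<Sum>k\<in>{1..<m}. sqrt_dissipation gam q (u t) k)"

lemma free_energy_has_derivative: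
  assumes t: "t > 0"
  shows "(free_energy has_real_derivative
      (\<Sum>l\<in>{1..m}. (ln (u t l) - ln (q l) - ln (total t)) * rate t l)) (at t)"
proof -
  have du: "((\<lambda>s. u s l) has_real_derivative rate t l) (at t)" if "l \<in> {1..m}" for l
    using u_has_derivative_at[OF t] that by auto
  have dx: "((\<lambda>s. xlnx (u s l)) has_real_derivative (ln (u t l) + 1) * rate t l) (at t)" if "l \<in> {1..m}" for l
    by (rule DERIV_chain2[OF DERIV_xlnx du[OF that]]) (use u_pos[OF t] that in auto)
  have dN: "(total has_real_derivative (\<Sum>l\<in>{1..m}. rate t l)) (at t)"
    unfolding total_def[abs_def] by (intro DERIV_sum du)
  have dxN: "((\<lambda>s. xlnx (total s)) has_real_derivative (ln (total t) + 1) * (\<Sum>l\<in>{1..m}. rate t l)) (at t)"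
    by (rule DERIV_chain2[OF DERIV_xlnx dN]) (use total_pos t in auto)
  have "(free_energy has_real_derivative
      (\<Sum>l\<in>{1..m}. (ln (u t l) + 1) * rate t l - rate t l * ln (q l))
        - (ln (total t) + 1) * (\<Sum>l\<in>{1..m}. rate t l)) (at t)"
    unfolding free_energy_def[abs_def] by (intro DERIV_diff DERIV_sum dx DERIV_cmult_right du dxN)
  moreover have "(\<Sum>l\<in>{1..m}. (ln (u t l) + 1) * rate t l - rate t l * ln (q l))
        - (ln (total t) + 1) * (\<Sum>l\<in>{1..m}. rate t l)
      = (\<Sum>l\<in>{1..m}. (ln (u t l) - ln (q l) - ln (total t)) * rate t l)"
    by (simp add: sum_distrib_left sum_subtractf[symmetric] algebra_simps)
  ultimately show ?thesis by simp
qed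

lemma free_energy_derivative_le:
  assumes t: "t > 0"
  shows "(\<Sum>l\<in>{1..m}. (ln (u t l) - ln (q l) - ln (total t)) * rate t l) \<le> - dissipation t"
proof -
  define c where "c l = ln (u t l) - ln (q l) - ln (total t)" for l
  have "sqrt_dissipation gam q (u t) k \<le> flux t k * (c 1 + c k - c (Suc k))" if k: "k \<in> {1..<m}" for k
  proof -
    define a where "a = u t 1 * u t k"
    define b where "b = total t * q k / q (Suc k) * u t (Suc k)"
    have pos: "u t 1 > 0" "u t k > 0" "u t (Suc k) > 0" "total t > 0" "q k > 0" "q (Suc k) > 0"
      using u_pos[OF t] k total_pos t q_pos by auto
    then have "a > 0" "b > 0" by (auto simp: a_def b_def)
    have "c 1 + c k - c (Suc k) = ln a - ln b"
      using pos q1 by (simp add: c_def a_def b_def ln_mult ln_div)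
    moreover have "flux t k = gam k * (a - b)" by (simp add: flux_def a_def b_def)
    moreover have "sqrt_dissipation gam q (u t) k = gam k * (sqrt a - sqrt b) ^ 2"
      using t by (simp add: sqrt_dissipation_def a_def b_def Ntot_u)
    moreover have "gam k * (sqrt a - sqrt b) ^ 2 \<le> gam k * ((a - b) * (ln a - ln b))"
      using gam_pos k square_sqrt_diff_le_mult_ln_diff[OF \<open>a > 0\<close> \<open>b > 0\<close>] by (intro mult_left_mono) auto
    ultimately show ?thesis by (simp add: mult_ac)
  qed
  then have "dissipation t \<le> (\<Sum>k\<in>{1..<m}. flux t k * (c 1 + c k - c (Suc k)))"
    unfolding dissipation_def by (rule sum_mono)
  also have "\<dots> = - (\<Sum>l\<in>{1..m}. c l * rate t l)"
    unfolding rate_def sum_mult_truncated_rate[OF m2] by simp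
  finally show ?thesis by (simp add: c_def)
qed

lemma continuous_on_sqrt_dissipation: "continuous_on {0..} (\<lambda>s. sqrt_dissipation gam q (u s) k)"
proof -
  have "q (Suc k) \<noteq> 0" using q_pos[rule_format, of "Suc k"] by simp
  then have "continuous_on {0..} (\<lambda>t. gam k * (sqrt (u t 1 * u t k)
      - sqrt (total t * q k / q (Suc k) * u t (Suc k))) ^ 2)"
    by (intro continuous_intros continuous_on_u continuous_on_total) auto
  then show ?thesis by (rule continuous_on_cong[THEN iffD1, rotated 2]) (simp_all add: sqrt_dissipation_def Ntot_u)
qed

lemma continuous_on_free_energy: "continuous_on {0..} free_energy"
proof -
  have "continuous_on {0..} (\<lambda>s. xlnx (u s l))" for l
    by (rule continuous_on_compose2[OF continuous_on_xlnx continuous_on_u]) (use u_nonneg in auto)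
  moreover have "continuous_on {0..} (\<lambda>s. xlnx (total s))"
    by (rule continuous_on_compose2[OF continuous_on_xlnx continuous_on_total]) (use total_nonneg in auto)
  ultimately show ?thesis
    unfolding free_energy_def[abs_def] by (intro continuous_intros continuous_on_u)
qed

lemma free_energy_dissipation_inequality:
  assumes t: "t \<ge> 0" shows "free_energy t + integral {0..t} dissipation \<le> free_energy 0"
proof (cases "t = 0")
  case False
  then have t0: "t > 0" using t by simp
  have Dc: "continuous_on {0..t} dissipation"
    unfolding dissipation_def[abs_def]
    by (intro continuous_on_sum continuous_on_subset[OF continuous_on_sqrt_dissipation]) auto
  have "(\<lambda>s. free_energy s + integral {0..s} dissipation) t \<le> (\<lambda>s. free_energy s + integral {0..s} dissipation) 0"
  proof (rule DERIV_nonpos_imp_decreasing_open[OF t])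
    fix x assume x: "0 < x" "x < t"
    have "((\<lambda>s. integral {0..s} dissipation) has_real_derivative dissipation x) (at x within {0..t})"
      by (rule integral_has_real_derivative[OF Dc]) (use x in auto)
    moreover have "at x within {0..t} = at x" by (rule at_within_Icc_at) (use x in auto)
    ultimately have "((\<lambda>s. free_energy s + integral {0..s} dissipation) has_real_derivative
        (\<Sum>l\<in>{1..m}. (ln (u x l) - ln (q l) - ln (total x)) * rate x l) + dissipation x) (at x)"
      using free_energy_has_derivative[OF x(1)] by (intro DERIV_add) auto
    then show "\<exists>y. ((\<lambda>s. free_energy s + integral {0..s} dissipation) has_real_derivative y) (at x) \<and> y \<le> 0"
      using free_energy_derivative_le[OF x(1)] by force
  next
    show "continuous_on {0..t} (\<lambda>s. free_energy s + integral {0..s} dissipation)"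
      by (intro continuous_on_add continuous_on_subset[OF continuous_on_free_energy]
          indefinite_integral_continuous_1 integrable_continuous_real Dc) auto
  qed
  then show ?thesis by simp
qed simp

text \<open>The tangent bound \<open>x ln x \<ge> x ln 2\<^sup>-\<^sup>l + x - 2\<^sup>-\<^sup>l\<close> makes the entropy of the \<open>l\<close>-th
  component at least \<open>-l x ln 2 - 2\<^sup>-\<^sup>l\<close>, which sums to a multiple of the mass.\<close>

lemma free_energy_lower:
  assumes B: "\<forall>l\<ge>1. \<bar>ln (q l)\<bar> \<le> B * real l" and t: "t \<ge> 0"
  shows "free_energy t \<ge> -((ln 2 + B) * mass0 + 2 + mass0 ^ 2)"
proof -
  have "xlnx (u t l) - u t l * ln (q l) \<ge> -((ln 2 + B) * (real l * u t l)) - (1/2) ^ l"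
    if l: "l \<in> {1..m}" for l
  proof -
    have x: "u t l \<ge> 0" by (rule u_nonneg[OF t])
    have "xlnx (u t l) \<ge> u t l * ln ((1/2) ^ l) + u t l - (1/2) ^ l"
      by (rule xlnx_ge_tangent[OF x]) simp
    moreover have "ln ((1/2::real) ^ l) = - (real l * ln 2)" by (simp add: ln_realpow ln_div)
    moreover have "ln (q l) \<le> B * real l" using B l by force
    then have "u t l * ln (q l) \<le> u t l * (B * real l)" using x by (rule mult_left_mono)
    ultimately show ?thesis using x by (simp add: algebra_simps)
  qed
  then have "(\<Sum>l\<in>{1..m}. -((ln 2 + B) * (real l * u t l)) - (1/2) ^ l)
      \<le> (\<Sum>l\<in>{1..m}. xlnx (u t l) - u t l * ln (q l))"
    by (intro sum_mono)
  moreover have "(\<Sum>l\<in>{1..m}. -((ln 2 + B) * (real l * u t l)) - (1/2) ^ l)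
      = -((ln 2 + B) * mass0) - (\<Sum>l\<in>{1..m}. (1/2::real) ^ l)"
    using mass_conserved[OF t] by (simp add: sum_subtractf sum_negf sum_distrib_left[symmetric])
  ultimately have "(\<Sum>l\<in>{1..m}. xlnx (u t l) - u t l * ln (q l)) \<ge> -((ln 2 + B) * mass0) - 2"
    using sum_half_power_le_2[of m] by linarith
  moreover have "xlnx (total t) \<le> mass0 ^ 2"
  proof -
    have N: "0 \<le> total t" "total t \<le> mass0" using total_nonneg[OF t] total_le_mass0[OF t] by auto
    have "xlnx (total t) \<le> total t * total t" using xlnx_le[OF N(1)] N(1) by (simp add: algebra_simps)
    also have "\<dots> \<le> mass0 * mass0" using N by (intro mult_mono) auto
    finally show ?thesis by (simp add: power2_eq_square)
  qed
  ultimately show ?thesis unfolding free_energy_def by linarith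
qed

lemma free_energy_0_upper:
  assumes B: "\<forall>l\<ge>1. \<bar>ln (q l)\<bar> \<le> B * real l"
  shows "free_energy 0 \<le> rho y * mass0 + B * mass0 + 1"
proof -
  have "xlnx (u 0 l) - u 0 l * ln (q l) \<le> rho y * (real l * y l) + B * (real l * y l)"
    if l: "l \<in> {1..m}" for l
  proof -
    have x: "y l \<ge> 0" using X0pD(2)[OF y] .
    have "xlnx (y l) \<le> y l * y l" using xlnx_le[OF x] x by (simp add: algebra_simps)
    also have "\<dots> \<le> rho y * (real l * y l)"
      by (rule mult_mono[OF X0p_le_rho[OF y] X0p_le_mult_self[OF y] X0p_rho_nonneg[OF y] x])
    finally have "xlnx (y l) \<le> rho y * (real l * y l)" .
    moreover have "- ln (q l) \<le> B * real l" using B l by force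
    then have "- (y l * ln (q l)) \<le> y l * (B * real l)" using mult_left_mono[OF _ x] by force
    ultimately show ?thesis using u_0 l by (simp add: algebra_simps)
  qed
  then have "(\<Sum>l\<in>{1..m}. xlnx (u 0 l) - u 0 l * ln (q l)) \<le> (\<Sum>l\<in>{1..m}. rho y * (real l * y l) + B * (real l * y l))"
    by (intro sum_mono)
  also have "\<dots> = rho y * mass0 + B * mass0"
    unfolding mass0_def by (simp add: sum.distrib sum_distrib_left)
  finally show ?thesis
    using xlnx_ge_minus_one[OF total_nonneg[of 0]] unfolding free_energy_def by simp
qed

lemma integral_sqrt_dissipation_le:
  assumes B: "\<forall>l\<ge>1. \<bar>ln (q l)\<bar> \<le> B * real l" and t: "t \<ge> 0" and L: "L < m"
  shows "integral {0..t} (\<lambda>s. \<Sum>k\<in>{1..L}. sqrt_dissipation gam q (u s) k)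
    \<le> 2 * rho y ^ 2 + 2 * B * rho y + ln 2 * rho y + 3"
proof -
  have cD: "continuous_on {0..t} dissipation"
    unfolding dissipation_def[abs_def]
    by (intro continuous_on_sum continuous_on_subset[OF continuous_on_sqrt_dissipation]) auto
  have cL: "continuous_on {0..t} (\<lambda>s. \<Sum>k\<in>{1..L}. sqrt_dissipation gam q (u s) k)"
    by (intro continuous_on_sum continuous_on_subset[OF continuous_on_sqrt_dissipation]) auto
  have "integral {0..t} (\<lambda>s. \<Sum>k\<in>{1..L}. sqrt_dissipation gam q (u s) k) \<le> integral {0..t} dissipation"
    unfolding dissipation_def
    by (intro integral_le integrable_continuous_real cL cD[unfolded dissipation_def] sum_mono2)
      (use L gam_pos in \<open>auto intro: sqrt_dissipation_nonneg\<close>)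
  also have "\<dots> \<le> free_energy 0 - free_energy t"
    using free_energy_dissipation_inequality[OF t] by simp
  also have "\<dots> \<le> (rho y * mass0 + B * mass0 + 1) + ((ln 2 + B) * mass0 + 2 + mass0 ^ 2)"
    using free_energy_0_upper[OF B] free_energy_lower[OF B t] by linarith
  also have "\<dots> \<le> 2 * rho y ^ 2 + 2 * B * rho y + ln 2 * rho y + 3"
  proof -
    have M: "0 \<le> mass0" "mass0 \<le> rho y" using mass0_nonneg mass0_le_rho by auto
    have "0 \<le> B" using B q1 by force
    have "rho y * mass0 \<le> rho y * rho y" using M by (intro mult_left_mono) auto
    moreover have "B * mass0 \<le> B * rho y" by (rule mult_left_mono[OF M(2) \<open>0 \<le> B\<close>])
    moreover have "ln 2 * mass0 \<le> ln 2 * rho y" using M by (intro mult_left_mono) auto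
    moreover have "mass0 * mass0 \<le> rho y * rho y" using M by (intro mult_mono) auto
    moreover have "(ln 2 + B) * mass0 = ln 2 * mass0 + B * mass0" "mass0 ^ 2 = mass0 * mass0"
      "rho y ^ 2 = rho y * rho y" "2 * B * rho y = B * rho y + B * rho y"
      by (simp_all add: distrib_right power2_eq_square)
    ultimately show ?thesis by linarith
  qed
  finally show ?thesis .
qed

end

section \<open>Passing to the limit\<close>
lemma sqrt_dissipation_le:
  assumes w: "w \<in> mass_ball M" and k: "k \<ge> 1" and gam: "gam k > 0" and q: "\<forall>l\<ge>1. q l > 0"
  shows "sqrt_dissipation gam q w k \<le> gam k * (M * M + M * (q k / q (Suc k)) * M)"
proof -
  note wl = mass_ballD[OF w]
  have N: "0 \<le> Ntot w" "Ntot w \<le> M"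
    using X0p_Ntot_nonneg[OF wl(1)] X0p_Ntot_le_rho[OF wl(1)] wl(2) by auto
  define r where "r = q k / q (Suc k)"
  have r: "r > 0" using q k by (simp add: r_def)
  define a where "a = w 1 * w k"
  define b where "b = Ntot w * r * w (Suc k)"
  have a: "0 \<le> a" "a \<le> M * M" unfolding a_def using wl(3) mult_mono[OF wl(4) wl(4) wl(5) wl(3)] by auto
  have "Ntot w * r \<le> M * r" using N(2) r by (intro mult_right_mono) auto
  then have b: "0 \<le> b" "b \<le> M * r * M"
    unfolding b_def using N(1) wl(3,4,5) r by (auto intro!: mult_mono mult_nonneg_nonneg)
  have "(sqrt a - sqrt b) ^ 2 = a + b - 2 * (sqrt a * sqrt b)"
    using a b by (simp add: power2_diff mult_ac)
  then have "(sqrt a - sqrt b) ^ 2 \<le> M * M + M * r * M"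
    using a b real_sqrt_ge_zero[OF a(1)] real_sqrt_ge_zero[OF b(1)] mult_nonneg_nonneg by smt
  moreover have "sqrt_dissipation gam q w k = gam k * (sqrt a - sqrt b) ^ 2"
    by (simp add: sqrt_dissipation_def a_def b_def r_def)
  ultimately show ?thesis unfolding r_def[symmetric] using gam by (simp add: mult_left_mono)
qed

lemma sqrt_dissipation_tendsto_componentwise:
  assumes q: "\<forall>l\<ge>1. q l > 0" and "\<And>k. w k \<in> mass_ball M" "v \<in> mass_ball M"
    and c: "\<And>l. (\<lambda>k. w k l) \<longlonglongrightarrow> v l"
  shows "(\<lambda>k. sqrt_dissipation gam q (w k) l) \<longlonglongrightarrow> sqrt_dissipation gam q v l"
proof -
  have "q (Suc l) \<noteq> 0" using q[rule_format, of "Suc l"] by simp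
  then show ?thesis
    unfolding sqrt_dissipation_def by (intro tendsto_intros c Ntot_tendsto_componentwise[OF assms(2-4)]) simp
qed

lemma equilibrium_of_sqrt_dissipation_zero:
  assumes v: "v \<in> X0p" and gam: "\<forall>l\<ge>1. gam l > 0" and zero: "\<And>l. l \<ge> 1 \<Longrightarrow> sqrt_dissipation gam q v l = 0"
  shows "equilibrium gam q v"
proof -
  have J: "Jflux gam q v l = 0" if "l \<ge> 1" for l
  proof -
    have "sqrt (v 1 * v l) = sqrt (Ntot v * q l / q (Suc l) * v (Suc l))"
      using zero[OF that] gam[rule_format, OF that] by (simp add: sqrt_dissipation_def)
    then have "v 1 * v l = Ntot v * q l / q (Suc l) * v (Suc l)" by simp
    then show ?thesis using that by (simp add: Jflux_def)
  qed
  have "(\<lambda>k. gam (Suc k) * (v 1 * v (Suc k) - Ntot v * q (Suc k) / q (Suc (Suc k)) * v (Suc (Suc k))))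
      = (\<lambda>k. 0)"
    using J[of "Suc _"] by (simp add: Jflux_def fun_eq_iff)
  then have "Jflux gam q v 0 = 0" by (simp add: Jflux_def)
  then have "Jflux gam q v l = 0" for l using J by (cases l) auto
  then show ?thesis using v by (simp add: equilibrium_def)
qed

lemma tendsto_at_top_of_antimono_subseq:
  fixes f :: "real \<Rightarrow> real" and s :: "nat \<Rightarrow> real"
  assumes anti: "\<And>a b. 0 \<le> a \<Longrightarrow> a \<le> b \<Longrightarrow> f b \<le> f a"
    and s: "filterlim s at_top sequentially" "\<And>k. s k \<ge> 0"
    and lim: "(\<lambda>k. f (s k)) \<longlonglongrightarrow> L"
  shows "(f \<longlongrightarrow> L) at_top"
proof (rule order_tendstoI)
  fix a assume "a < L"
  have "L \<le> f t" if "t \<ge> 0" for t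
  proof (rule tendsto_upperbound[OF lim])
    have "eventually (\<lambda>k. s k \<ge> t) sequentially" using s(1) by (simp add: filterlim_at_top)
    then show "eventually (\<lambda>k. f (s k) \<le> f t) sequentially" by eventually_elim (use anti that in auto)
  qed simp
  then show "eventually (\<lambda>t. a < f t) at_top"
    using \<open>a < L\<close> unfolding eventually_at_top_linorder by (intro exI[of _ 0]) (auto intro: less_le_trans)
next
  fix a assume "L < a"
  then obtain k where "f (s k) < a"
    using order_tendstoD(2)[OF lim] by (auto simp: eventually_sequentially)
  then show "eventually (\<lambda>t. f t < a) at_top"
    unfolding eventually_at_top_linorder using anti s(2) by (intro exI[of _ "s k"]) (auto intro: le_less_trans)
qed

lemma abs_rho_diff_le_Xnorm:
  assumes z: "z \<in> X0p" and w: "w \<in> X0p"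
  shows "summable (\<lambda>l. real l * \<bar>(z - w) l\<bar>)" "\<bar>rho z - rho w\<bar> \<le> Xnorm (z - w)"
proof -
  have sz: "summable (\<lambda>l. real l * z l)" and sw: "summable (\<lambda>l. real l * w l)"
    using X0pD(3) z w by auto
  have "norm (real l * \<bar>(z - w) l\<bar>) \<le> real l * z l + real l * w l" for l
    using X0pD(2)[OF z, of l] X0pD(2)[OF w, of l] by (simp add: abs_mult distrib_left[symmetric] mult_left_mono)
  then show s: "summable (\<lambda>l. real l * \<bar>(z - w) l\<bar>)"
    by (rule summable_comparison_test'[OF summable_add[OF sz sw]])
  have "rho z - rho w = (\<Sum>l. real l * (z - w) l)"
    unfolding rho_def using suminf_diff[OF sz sw] by (simp add: algebra_simps)
  moreover have "norm (\<Sum>l. real l * (z - w) l) \<le> (\<Sum>l. real l * \<bar>(z - w) l\<bar>)"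
    by (rule norm_suminf_le[OF _ s]) (simp add: abs_mult)
  ultimately show "\<bar>rho z - rho w\<bar> \<le> Xnorm (z - w)" unfolding Xnorm_def by simp
qed

lemma Xnorm_diff_le:
  assumes z: "z \<in> X0p" and w: "w \<in> X0p"
  shows "Xnorm (z - w) \<le> (\<Sum>l<L. real l * \<bar>z l - w l\<bar>)
    + (rho z - (\<Sum>l<L. real l * z l)) + (rho w - (\<Sum>l<L. real l * w l))"
proof -
  have sz: "summable (\<lambda>n. real (n + L) * z (n + L))" and sw: "summable (\<lambda>n. real (n + L) * w (n + L))"
    using X0pD(3) z w summable_iff_shift[of "\<lambda>l. real l * z l" L] summable_iff_shift[of "\<lambda>l. real l * w l" L]
    by auto
  have s: "summable (\<lambda>l. real l * \<bar>(z - w) l\<bar>)" by (rule abs_rho_diff_le_Xnorm(1)[OF z w])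
  have "Xnorm (z - w) = (\<Sum>n. real (n + L) * \<bar>(z - w) (n + L)\<bar>) + (\<Sum>l<L. real l * \<bar>(z - w) l\<bar>)"
    unfolding Xnorm_def by (rule suminf_split_initial_segment[OF s])
  also have "(\<Sum>n. real (n + L) * \<bar>(z - w) (n + L)\<bar>) \<le> (\<Sum>n. real (n + L) * z (n + L) + real (n + L) * w (n + L))"
  proof (rule suminf_le)
    show "real (n + L) * \<bar>(z - w) (n + L)\<bar> \<le> real (n + L) * z (n + L) + real (n + L) * w (n + L)" for n
      using X0pD(2)[OF z, of "n + L"] X0pD(2)[OF w, of "n + L"]
      by (simp add: distrib_left[symmetric] mult_left_mono)
    show "summable (\<lambda>n. real (n + L) * \<bar>(z - w) (n + L)\<bar>)"
      using s summable_iff_shift[of "\<lambda>l. real l * \<bar>(z - w) l\<bar>" L] by simp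
  qed (rule summable_add[OF sz sw])
  also have "(\<Sum>n. real (n + L) * z (n + L) + real (n + L) * w (n + L))
      = (rho z - (\<Sum>l<L. real l * z l)) + (rho w - (\<Sum>l<L. real l * w l))"
    using suminf_add[OF sz sw] suminf_split_initial_segment[OF X0pD(3)[OF z], of L]
      suminf_split_initial_segment[OF X0pD(3)[OF w], of L] by (simp add: rho_def)
  finally show ?thesis by (simp add: add_ac fun_diff_def)
qed

lemma Xnorm_tendsto_0_of_componentwise:
  assumes w: "eventually (\<lambda>t. w t \<in> X0p) F" and v: "v \<in> X0p"
    and comp: "\<And>l. ((\<lambda>t. w t l) \<longlongrightarrow> v l) F" and mass: "((\<lambda>t. rho (w t)) \<longlongrightarrow> rho v) F"
  shows "((\<lambda>t. Xnorm (w t - v)) \<longlongrightarrow> 0) F"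
proof (rule tendstoI)
  fix e :: real assume e: "e > 0"
  obtain L where "\<bar>\<Sum>i. real (i + L) * v (i + L)\<bar> < e / 5"
    using suminf_exist_split[of "e / 5" "\<lambda>l. real l * v l"] X0pD(3)[OF v] e by auto
  then have tail: "rho v - (\<Sum>l<L. real l * v l) < e / 5"
    using suminf_split_initial_segment[OF X0pD(3)[OF v], of L] unfolding rho_def by simp
  have "((\<lambda>t. \<Sum>l<L. real l * \<bar>w t l - v l\<bar>) \<longlongrightarrow> (\<Sum>l<L. real l * \<bar>v l - v l\<bar>)) F"
    by (intro tendsto_intros comp)
  then have A: "eventually (\<lambda>t. (\<Sum>l<L. real l * \<bar>w t l - v l\<bar>) < e / 5) F"
    using e by (intro order_tendstoD(2)) auto
  have "((\<lambda>t. \<Sum>l<L. real l * w t l) \<longlongrightarrow> (\<Sum>l<L. real l * v l)) F"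
    by (intro tendsto_intros comp)
  then have P: "eventually (\<lambda>t. (\<Sum>l<L. real l * v l) - e / 5 < (\<Sum>l<L. real l * w t l)) F"
    using e by (intro order_tendstoD(1)) auto
  have R: "eventually (\<lambda>t. rho (w t) < rho v + e / 5) F"
    using e by (intro order_tendstoD(2)[OF mass]) auto
  show "eventually (\<lambda>t. dist (Xnorm (w t - v)) 0 < e) F"
    using A P R w
  proof eventually_elim
    case (elim t)
    have "0 \<le> Xnorm (w t - v)"
      unfolding Xnorm_def by (intro suminf_nonneg abs_rho_diff_le_Xnorm(1)[OF elim(4) v]) auto
    then show ?case using Xnorm_diff_le[OF elim(4) v, of L] elim tail by (simp add: dist_real_def)
  qed
qed

locale truncation_limit = cluster_coefficients q R
  for q :: "nat \<Rightarrow> real" and R :: real +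
  fixes gam y :: "nat \<Rightarrow> real" and zm :: "nat \<Rightarrow> real \<Rightarrow> nat \<Rightarrow> real" and z :: "real \<Rightarrow> nat \<Rightarrow> real"
    and mj :: "nat \<Rightarrow> nat"
  assumes q1: "q 1 = 1" and gam_pos: "\<forall>l\<ge>1. gam l > 0"
    and y: "y \<in> X0p" and y1: "y 1 > 0"
    and truncated: "\<forall>m\<ge>2. truncated_solution gam q y m (zm m)"
    and mj: "strict_mono mj" "\<forall>j. mj j \<ge> 2"
    and conv: "\<forall>l. \<forall>T\<ge>0. uniform_limit {0..T} (\<lambda>j t. zm (mj j) t l) (\<lambda>t. z t l) sequentially"
    and z_X0p: "\<forall>t\<ge>0. z t \<in> X0p"
    and z_rho: "\<forall>t\<ge>0. rho (z t) = rho y"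
    and Afun_antimono: "\<forall>s t. 0 \<le> s \<and> s \<le> t \<longrightarrow> Afun q (z t) \<le> Afun q (z s)"
begin

definition omega :: "(nat \<Rightarrow> real) set" where
  "omega = {w \<in> Xsp. \<exists>tk :: nat \<Rightarrow> real.
     filterlim tk at_top sequentially \<and> limitin weakstar (\<lambda>k. z (tk k)) w sequentially}"

definition partial_dissipation :: "nat \<Rightarrow> (nat \<Rightarrow> real) \<Rightarrow> real" where
  "partial_dissipation L w = (\<Sum>k\<in>{1..L}. sqrt_dissipation gam q w k)"

lemma partial_dissipation_nonneg: "partial_dissipation L w \<ge> 0"
  unfolding partial_dissipation_def by (intro sum_nonneg sqrt_dissipation_nonneg) (use gam_pos in auto)

lemma truncated_system_mj: "truncated_system gam q y (mj j) (zm (mj j))"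
  by unfold_locales (use mj truncated gam_pos q_pos q1 y y1 in auto)

lemma z_mass_ball: "t \<ge> 0 \<Longrightarrow> z t \<in> mass_ball (rho y)"
  using z_X0p z_rho by (simp add: mass_ball_def)

lemma zm_tendsto: "t \<ge> 0 \<Longrightarrow> (\<lambda>j. zm (mj j) t l) \<longlonglongrightarrow> z t l"
  by (rule tendsto_uniform_limitI[where S = "{0..t}"]) (use conv in auto)

text \<open>The dissipation bound of the truncated systems is uniform in \<open>m\<close>; it passes to \<open>z\<close> by
  dominated convergence, each \<open>sqrt_dissipation\<close> term being bounded on the mass ball.\<close>

lemma integral_partial_dissipation_le:
  assumes B: "\<forall>l\<ge>1. \<bar>ln (q l)\<bar> \<le> B * real l" and T: "T \<ge> 0"
  shows "(\<lambda>s. partial_dissipation L (z s)) integrable_on {0..T}"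
    and "integral {0..T} (\<lambda>s. partial_dissipation L (z s)) \<le> 2 * rho y ^ 2 + 2 * B * rho y + ln 2 * rho y + 3"
proof -
  define f where "f j s = partial_dissipation L (zm (mj j) s)" for j s
  define h where "h = (\<lambda>s::real. \<Sum>k\<in>{1..L}. gam k * (rho y * rho y + rho y * (q k / q (Suc k)) * rho y))"
  have zm_ball: "zm (mj j) s \<in> mass_ball (rho y)" if "s \<ge> 0" for j s
    using truncated_system.u_mass_ball[OF truncated_system_mj that] .
  have f_int: "f j integrable_on {0..T}" for j
    unfolding f_def partial_dissipation_def
    by (intro integrable_continuous_real continuous_on_sum continuous_on_subset[OF
          truncated_system.continuous_on_sqrt_dissipation[OF truncated_system_mj]]) auto
  have h_int: "h integrable_on {0..T}" unfolding h_def by (rule integrable_const_ivl)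
  have f_le: "norm (f j s) \<le> h s" if "s \<in> {0..T}" for j s
  proof -
    have "sqrt_dissipation gam q (zm (mj j) s) k \<le> gam k * (rho y * rho y + rho y * (q k / q (Suc k)) * rho y)"
      if "k \<in> {1..L}" for k
      using that gam_pos \<open>s \<in> {0..T}\<close> by (intro sqrt_dissipation_le[OF zm_ball _ _ q_pos]) auto
    then have "f j s \<le> h s" unfolding f_def h_def partial_dissipation_def by (rule sum_mono)
    moreover have "0 \<le> f j s" unfolding f_def by (rule partial_dissipation_nonneg)
    ultimately show ?thesis by simp
  qed
  have f_lim: "(\<lambda>j. f j s) \<longlonglongrightarrow> partial_dissipation L (z s)" if "s \<in> {0..T}" for s
    unfolding f_def partial_dissipation_def using that
    by (intro tendsto_sum sqrt_dissipation_tendsto_componentwise[OF q_pos zm_ball z_mass_ball zm_tendsto]) auto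
  show "(\<lambda>s. partial_dissipation L (z s)) integrable_on {0..T}"
    by (rule dominated_convergence(1)[OF f_int h_int f_le f_lim])
  have "integral {0..T} (f j) \<le> 2 * rho y ^ 2 + 2 * B * rho y + ln 2 * rho y + 3" if "j \<ge> Suc L" for j
  proof -
    have "L < mj j" using seq_suble[OF mj(1), of j] that by simp
    then show ?thesis unfolding f_def partial_dissipation_def
      by (rule truncated_system.integral_sqrt_dissipation_le[OF truncated_system_mj B T])
  qed
  then show "integral {0..T} (\<lambda>s. partial_dissipation L (z s)) \<le> 2 * rho y ^ 2 + 2 * B * rho y + ln 2 * rho y + 3"
    using LIMSEQ_le_const2[OF dominated_convergence(2)[OF f_int h_int f_le f_lim]] by blast
qed

lemma exists_small_partial_dissipation:
  assumes B: "\<forall>l\<ge>1. \<bar>ln (q l)\<bar> \<le> B * real l"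
  shows "\<exists>t\<ge>real k. partial_dissipation k (z t) \<le> 1 / (real k + 1)"
proof (rule ccontr)
  assume "\<not> ?thesis"
  then have big: "1 / (real k + 1) \<le> partial_dissipation k (z t)" if "t \<ge> real k" for t
    using that by force
  define C where "C = 2 * rho y ^ 2 + 2 * B * rho y + ln 2 * rho y + 3"
  define T where "T = real k + (\<bar>C\<bar> + 1) * (real k + 1)"
  have kT: "real k \<le> T" and T0: "T \<ge> 0" unfolding T_def by auto
  have int0: "(\<lambda>s. partial_dissipation k (z s)) integrable_on {0..T}"
    by (rule integral_partial_dissipation_le(1)[OF B T0])
  have int1: "(\<lambda>s. partial_dissipation k (z s)) integrable_on {real k..T}"
    by (rule integrable_on_subinterval[OF int0]) auto
  have "\<bar>C\<bar> + 1 = integral {real k..T} (\<lambda>s. 1 / (real k + 1))"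
    using kT by (simp add: T_def)
  also have "\<dots> \<le> integral {real k..T} (\<lambda>s. partial_dissipation k (z s))"
    by (rule integral_le[OF _ int1]) (use big in auto)
  also have "\<dots> \<le> integral {0..T} (\<lambda>s. partial_dissipation k (z s))"
    by (rule integral_subset_le[OF _ int1 int0]) (auto intro: partial_dissipation_nonneg)
  also have "\<dots> \<le> C" unfolding C_def by (rule integral_partial_dissipation_le(2)[OF B T0])
  finally show False by simp
qed

lemma omega_limit_of_subseq:
  assumes s: "filterlim s at_top sequentially" and s0: "\<And>k. s k \<ge> 0"
  obtains r v where "strict_mono r" "v \<in> mass_ball (rho y)" "v \<in> omega"
    "\<And>l. (\<lambda>k. z (s (r k)) l) \<longlonglongrightarrow> v l" "limitin weakstar (\<lambda>k. z (s (r k))) v sequentially"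
proof -
  obtain r v where rv: "strict_mono r" "v \<in> mass_ball (rho y)" "\<And>l. (\<lambda>k. z (s (r k)) l) \<longlonglongrightarrow> v l"
    using mass_ball_convergent_subseq[of "\<lambda>k. z (s k)"] z_mass_ball s0 by blast
  have lim: "limitin weakstar (\<lambda>k. z (s (r k))) v sequentially"
    by (rule limitin_weakstar_componentwise[OF z_mass_ball[OF s0] rv(2,3)])
  moreover have "filterlim (\<lambda>k. s (r k)) at_top sequentially"
    by (rule filterlim_compose[OF s filterlim_subseq[OF rv(1)]])
  ultimately have "v \<in> omega"
    unfolding omega_def using mass_ballD(1)[OF rv(2)] X0p_Xsp by (auto intro!: exI[of _ "\<lambda>k. s (r k)"])
  then show ?thesis using that rv lim by blast
qed

lemma sqrt_dissipation_zero_of_small_partial_dissipation: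
  assumes w: "\<And>k. w k \<in> mass_ball M" and v: "v \<in> mass_ball M" and lim: "\<And>l. (\<lambda>k. w k l) \<longlonglongrightarrow> v l"
    and r: "strict_mono r" and small: "\<And>k. partial_dissipation (r k) (w k) \<le> 1 / (real (r k) + 1)"
    and l: "l \<ge> 1"
  shows "sqrt_dissipation gam q v l = 0"
proof (rule antisym)
  have "sqrt_dissipation gam q (w k) l \<le> 1 / real (Suc k)" if "k \<ge> l" for k
  proof -
    have rk: "k \<le> r k" by (rule seq_suble[OF r])
    have "sqrt_dissipation gam q (w k) l \<le> partial_dissipation (r k) (w k)"
      unfolding partial_dissipation_def
      by (rule member_le_sum) (use l that rk gam_pos in \<open>auto intro: sqrt_dissipation_nonneg\<close>)
    also have "\<dots> \<le> 1 / real (Suc k)"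
      using small[of k] rk by (simp add: frac_le order_trans)
    finally show ?thesis .
  qed
  then show "sqrt_dissipation gam q v l \<le> 0"
    by (intro LIMSEQ_le[OF sqrt_dissipation_tendsto_componentwise[OF q_pos w v lim]
        LIMSEQ_Suc[OF lim_inverse_n']]) auto
  show "sqrt_dissipation gam q v l \<ge> 0" using gam_pos l by (intro sqrt_dissipation_nonneg) simp
qed

lemma Atil_z_antimono:
  assumes "0 \<le> a" "a \<le> b" shows "Atil q R (z b) \<le> Atil q R (z a)"
proof -
  have "z a \<in> X0p" "z b \<in> X0p" "rho (z a) = rho (z b)" using assms z_X0p z_rho by auto
  moreover have "Afun q (z b) \<le> Afun q (z a)" using Afun_antimono assms by blast
  ultimately show ?thesis by (simp add: Atil_eq)
qed

text \<open>The times \<open>t\<^sub>k \<ge> k\<close> at which the first \<open>k\<close> dissipation terms are below \<open>1/(k+1)\<close>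
  produce an \<open>\<omega>\<close>-limit point at which every term of the dissipation vanishes.\<close>

lemma exists_equilibrium_in_omega:
  obtains v where "v \<in> omega" "v \<in> mass_ball (rho y)" "equilibrium gam q v"
    "((\<lambda>t. Atil q R (z t)) \<longlongrightarrow> Atil q R v) at_top"
proof -
  obtain B where B: "\<forall>l\<ge>1. \<bar>ln (q l)\<bar> \<le> B * real l" by (rule ln_q_linear_bound)
  obtain tk where tk: "\<And>k. tk k \<ge> real k" "\<And>k. partial_dissipation k (z (tk k)) \<le> 1 / (real k + 1)"
    using exists_small_partial_dissipation[OF B] by metis
  have tk0: "tk k \<ge> 0" for k using tk(1)[of k] by simp
  have tk_lim: "filterlim tk at_top sequentially"
    by (rule filterlim_at_top_mono[OF filterlim_real_sequentially]) (use tk(1) in auto)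
  obtain r v where r: "strict_mono r" and v: "v \<in> mass_ball (rho y)" "v \<in> omega"
      and lim: "\<And>l. (\<lambda>k. z (tk (r k)) l) \<longlonglongrightarrow> v l"
    using omega_limit_of_subseq[OF tk_lim tk0] by blast
  have "equilibrium gam q v"
    using sqrt_dissipation_zero_of_small_partial_dissipation[OF z_mass_ball[OF tk0] v(1) lim r tk(2)]
    by (intro equilibrium_of_sqrt_dissipation_zero[OF mass_ballD(1)[OF v(1)] gam_pos])
  moreover have "((\<lambda>t. Atil q R (z t)) \<longlongrightarrow> Atil q R v) at_top"
  proof (rule tendsto_at_top_of_antimono_subseq[OF Atil_z_antimono])
    show "filterlim (\<lambda>k. tk (r k)) at_top sequentially"
      by (rule filterlim_compose[OF tk_lim filterlim_subseq[OF r]])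
    show "(\<lambda>k. Atil q R (z (tk (r k)))) \<longlonglongrightarrow> Atil q R v"
      by (rule Atil_tendsto_componentwise[OF z_mass_ball[OF tk0] v(1) lim])
  qed (use tk0 in auto)
  ultimately show ?thesis using v by (intro that)
qed

lemma limitin_weakstar_of_omega_singleton:
  assumes omega: "omega = {v}"
  shows "limitin weakstar z v at_top"
  unfolding limitin_def
proof (intro conjI allI impI)
  have "v \<in> omega" using omega by simp
  then show "v \<in> topspace weakstar" unfolding omega_def topspace_weakstar by simp
  fix U assume U: "openin weakstar U \<and> v \<in> U"
  show "eventually (\<lambda>t. z t \<in> U) at_top"
  proof (rule ccontr)
    assume "\<not> eventually (\<lambda>t. z t \<in> U) at_top"
    then have "\<forall>k::nat. \<exists>t. t \<ge> real k \<and> z t \<notin> U" by (simp add: eventually_at_top_linorder)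
    then obtain s where s: "\<And>k. s k \<ge> real k" "\<And>k. z (s k) \<notin> U"
      using choice[of "\<lambda>k t. t \<ge> real k \<and> z t \<notin> U"] by blast
    have s0: "s k \<ge> 0" for k using s(1)[of k] by simp
    have s_lim: "filterlim s at_top sequentially"
      by (rule filterlim_at_top_mono[OF filterlim_real_sequentially]) (use s(1) in auto)
    obtain r w where "w \<in> omega" and lim: "limitin weakstar (\<lambda>k. z (s (r k))) w sequentially"
      using omega_limit_of_subseq[OF s_lim s0] by blast
    then have "w = v" using omega by simp
    then have "eventually (\<lambda>k. z (s (r k)) \<in> U) sequentially"
      using lim U unfolding limitin_def by simp
    then show False using s(2) by (auto simp: eventually_sequentially)
  qed
qed

lemma Xnorm_tendsto_0_iff_rho:
  assumes v: "v \<in> X0p" and lim: "limitin weakstar z v at_top"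
  shows "((\<lambda>t. Xnorm (z t - v)) \<longlongrightarrow> 0) at_top \<longleftrightarrow> rho v = rho y"
proof
  assume X: "((\<lambda>t. Xnorm (z t - v)) \<longlongrightarrow> 0) at_top"
  have "eventually (\<lambda>t. \<bar>rho y - rho v\<bar> \<le> Xnorm (z t - v)) at_top"
    using abs_rho_diff_le_Xnorm(2)[OF z_X0p[rule_format] v] z_rho
    unfolding eventually_at_top_linorder by (intro exI[of _ 0]) auto
  then have "\<bar>rho y - rho v\<bar> \<le> 0" by (rule tendsto_lowerbound[OF X]) simp
  then show "rho v = rho y" by simp
next
  assume rho: "rho v = rho y"
  have pos: "eventually (\<lambda>t::real. t \<ge> 0) at_top" by (rule eventually_ge_at_top)
  show "((\<lambda>t. Xnorm (z t - v)) \<longlongrightarrow> 0) at_top"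
  proof (rule Xnorm_tendsto_0_of_componentwise[OF _ v])
    show "eventually (\<lambda>t. z t \<in> X0p) at_top" using pos by eventually_elim (use z_X0p in auto)
    have "eventually (\<lambda>t. rho (z t) = rho v) at_top" using pos by eventually_elim (use z_rho rho in auto)
    then show "((\<lambda>t. rho (z t)) \<longlongrightarrow> rho v) at_top" by (rule tendsto_eventually)
    show "((\<lambda>t. z t l) \<longlongrightarrow> v l) at_top" for l
    proof (cases "l = 0")
      case True
      have "eventually (\<lambda>t. z t l = v l) at_top"
        using pos by eventually_elim (use True X0pD(1)[OF v] X0pD(1) z_X0p in auto)
      then show ?thesis by (rule tendsto_eventually)
    qed (use limitin_weakstar_coordinate[OF lim] in simp)
  qed
qed

lemma compactin_orbit_closure: "compactin weakstar (weakstar closure_of {z t | t. t \<ge> 0})"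
proof -
  have "weakstar closure_of {z t | t. t \<ge> 0} \<subseteq> mass_ball (rho y)"
    by (rule closure_of_minimal[OF _ closedin_weakstar_mass_ball]) (use z_mass_ball in auto)
  then show ?thesis
    using closed_compactin[OF compactin_weakstar_mass_ball] closedin_closure_of by blast
qed

end

theorem corollary16:
  fixes q gam y :: "nat \<Rightarrow> real" and R :: real
    and zm :: "nat \<Rightarrow> real \<Rightarrow> nat \<Rightarrow> real" and z :: "real \<Rightarrow> nat \<Rightarrow> real"
    and mj :: "nat \<Rightarrow> nat"
  assumes q_pos: "\<forall>l\<ge>1. q l > 0" and q1: "q 1 = 1"
    and R_lim: "(\<lambda>l. q (Suc l) / q (Suc (Suc l))) \<longlonglongrightarrow> R" and R_pos: "0 < R"
    and gam_pos: "\<forall>l\<ge>1. gam l > 0"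
    and gam_lim: "(\<lambda>l. gam (Suc l) / real (Suc l)) \<longlonglongrightarrow> 0"
    and y: "y \<in> X0p" and y1: "y 1 > 0" and rho0: "rho y > 0"
    and trunc: "\<forall>m\<ge>2. truncated_solution gam q y m (zm m)"
    and mj: "strict_mono mj" "\<forall>j. mj j \<ge> 2"
    and conv: "\<forall>l. \<forall>T\<ge>0. uniform_limit {0..T} (\<lambda>j t. zm (mj j) t l) (\<lambda>t. z t l) sequentially"
    and zX: "\<forall>t\<ge>0. z t \<in> Xsp"
    and zcont: "\<forall>t\<ge>0. ((\<lambda>s. Xnorm (z s - z t)) \<longlongrightarrow> 0) (at t within {0..})"
    and zpos: "\<forall>t\<ge>0. z t \<in> X0p"
    and zrho: "\<forall>t\<ge>0. rho (z t) = rho y"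
    and zA: "\<forall>s t. 0 \<le> s \<and> s \<le> t \<longrightarrow> Afun q (z t) \<le> Afun q (z s)"
  defines "\<omega> \<equiv> {w \<in> Xsp. \<exists>tk :: nat \<Rightarrow> real.
                   filterlim tk at_top sequentially \<and> limitin weakstar (\<lambda>k. z (tk k)) w sequentially}"
  shows "compactin weakstar (weakstar closure_of {z t | t. t \<ge> 0})
     \<and> (\<exists>zinf \<in> \<omega>. equilibrium gam q zinf
          \<and> 0 \<le> rho zinf \<and> rho zinf \<le> rho y
          \<and> ((\<lambda>t. Atil q R (z t)) \<longlongrightarrow> Atil q R zinf) at_top
          \<and> (\<omega> = {zinf} \<longrightarrow>
               limitin weakstar z zinf at_top
               \<and> ((((\<lambda>t. Xnorm (z t - zinf)) \<longlongrightarrow> 0) at_top) \<longleftrightarrow> rho zinf = rho y)))"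
proof -
  interpret truncation_limit q R gam y zm z mj
    by unfold_locales (use assms in auto)
  have omega: "\<omega> = omega" unfolding \<omega>_def omega_def ..
  obtain v where v: "v \<in> omega" "v \<in> mass_ball (rho y)" "equilibrium gam q v"
    "((\<lambda>t. Atil q R (z t)) \<longlongrightarrow> Atil q R v) at_top"
    by (rule exists_equilibrium_in_omega)
  have "limitin weakstar z v at_top \<and> ((((\<lambda>t. Xnorm (z t - v)) \<longlongrightarrow> 0) at_top) \<longleftrightarrow> rho v = rho y)"
    if "omega = {v}"
    using limitin_weakstar_of_omega_singleton[OF that] Xnorm_tendsto_0_iff_rho[OF mass_ballD(1)[OF v(2)]]
    by blast
  then show ?thesis
    using compactin_orbit_closure v mass_ballD(2)[OF v(2)] X0p_rho_nonneg[OF mass_ballD(1)[OF v(2)]]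
    unfolding omega by blast
qed

end
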